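(* The category $\mathbf{DRC}$ of DRC-semigroups (with DRC-morphisms) is isomorphic to the category $\mathbf{CPC}$ of chained projection categories (with chained projection functors).
   Context: \textbf{DRC-semigroups.} A DRC-semigroup is an algebra $(S,\cdot,D,R)$ where $(S,\cdot)$ is a semigroup and $D,R:S\to S$ are unary operations satisfying, for all $a,b\in S$: $D(a)a=a$, $aR(a)=a$; $D(ab)=D(aD(b))$, $R(ab)=R(R(a)b)$; $D(ab)=D(a)D(ab)D(a)$, $R(ab)=R(b)R(ab)R(b)$; $R(D(a))=D(a)$, $D(R(a))=R(a)$. A DRC-morphism is a map preserving $\cdot$, $D$ and $R$; $\mathbf{DRC}$ is the category of DRC-semigroups and DRC-morphisms. \textbf{Projection algebras.} Maps are written to the right of their arguments and composed left to right ($p\,\alpha\beta=(p\alpha)\beta$). A projection algebra is a set $P$ with two families of maps $\theta_p,\delta_p:P\to P$ ($p\in P$) such that for all $p,q\in P$: $p\theta_p=p$, $p\delta_p=p$; $p\theta_{q\theta_p}=q\theta_p$, $p\delta_{q\delta_p}=q\delta_p$; $\theta_q\theta_{q\theta_p}=\theta_q\theta_p$, $\delta_q\delta_{q\delta_p}=\delta_q\delta_p$; $\theta_p\delta_p=\theta_p$, $\delta_p\theta_p=\delta_p$; $\theta_{p\delta_q}\theta_p=\theta_q\theta_p$, $\delta_{p\theta_q}\delta_p=\delta_q\delta_p$. It is partially ordered by $p\le q\iff p=p\theta_q$ (equivalently $p=p\delta_q$). Write $p\,\mathscr F\,q$ iff $p=q\delta_p$ and $q=p\theta_q$. A projection algebra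 morphism $\phi:P\to P'$ satisfies $(q\theta_p)\phi=(q\phi)\theta'_{p\phi}$ and $(q\delta_p)\phi=(q\phi)\delta'_{p\phi}$. \textbf{Biordered categories.} A small category $\mathcal C$ is identified with its set of morphisms; objects are identified with identity morphisms, forming $v\mathcal C$; $\mathbf d,\mathbf r:\mathcal C\to v\mathcal C$ are domain and codomain, and $a\circ b$ is defined iff $\mathbf r(a)=\mathbf d(b)$ (composition left to right). A left-ordered category is $(\mathcal C,\le)$ with a partial order such that: $a\le b$ implies $\mathbf d(a)\le\mathbf d(b)$ and $\mathbf r(a)\le \mathbf r(b)$; if $a\le b$, $c\le c'$, $\mathbf r(a)=\mathbf d(c)$, $\mathbf r(b)=\mathbf d(c')$ then $a\circ c\le b\circ c'$; for every object $p\le\mathbf d(a)$ there is a unique $u\le a$ with $\mathbf d(u)=p$, written ${}_p\lfloor a$ (left restriction). A right-ordered category is defined dually, with unique $v\le a$ having $\mathbf r(v)=q$ for each object $q\le\mathbf r(a)$, written $a\rfloor_q$. A biordered category is $(\mathcal C,\le_l,\le_r)$ with $(\mathcal C,\le_l)$ left-ordered, $(\mathcal C,\le_r)$ right-ordered, and $\le_l,\le_r$ agreeing on $v\mathcal C$. A biordered morphism is a functor preserving both orders. Write $\mathcal C(q,r)=\{a:\mathbf d(a)=q,\mathbf r(a)=r\}$ and $t^{\downarrow}=\{s:s\le t\}$. \textbf{Projection categories.} A weak projection category is a pair $(P,\mathcal C)$ with $\mathcal C$ biordered, $P=v\mathcal C$ a projection algebra, and both $\le_l,\le_r$ restricting on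 $P$ to the projection algebra order. For $a\in\mathcal C$ define $\vartheta_a:\mathbf d(a)^\downarrow\to\mathbf r(a)^\downarrow$, $p\vartheta_a=\mathbf r({}_p\lfloor a)$, and $\vartheta'_a:\mathbf r(a)^\downarrow\to\mathbf d(a)^\downarrow$, $q\vartheta'_a=\mathbf d(a\rfloor_q)$; and $\Theta_a=\theta_{\mathbf d(a)}\vartheta_a:P\to P$, $\Delta_a=\delta_{\mathbf r(a)}\vartheta'_a:P\to P$. A projection category is a weak projection category such that (C1) for all $a\in\mathcal C$, $p\le\mathbf d(a)$, $q\le\mathbf r(a)$: $\Theta_{a\rfloor_q}=\Theta_a\theta_q$ and $\Delta_{{}_p\lfloor a}=\Delta_a\delta_p$. \textbf{Chain category.} For a projection algebra $P$, a path is a tuple $(p_1,\dots,p_k)$, $k\ge1$, with $p_1\,\mathscr F\,p_2\,\mathscr F\cdots\mathscr F\,p_k$; $\mathbf d=p_1$, $\mathbf r=p_k$, composition $(p_1,\dots,p_k)\circ(p_k,\dots,p_l)=(p_1,\dots,p_l)$, objects $(p)\equiv p$. Restrictions: for $q\le p_1$, ${}_q\lfloor(p_1,\dots,p_k)=(q_1,\dots,q_k)$ with $q_1=q$, $q_i=q_{i-1}\theta_{p_i}$; for $r\le p_k$, $(p_1,\dots,p_k)\rfloor_r=(r_1,\dots,r_k)$ with $r_k=r$, $r_i=r_{i+1}\delta_{p_i}$. These make the path category biordered (with $\mathbf x\le_l\mathbf y\iff \mathbf x={}_{\mathbf d(\mathbf x)}\lfloor\mathbf y$, $\mathbf x\le_r\mathbf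 y\iff\mathbf x=\mathbf y\rfloor_{\mathbf r(\mathbf x)}$). The chain category $\mathcal C(P)$ is its quotient by the congruence generated by $(p,p)\approx(p)$ for $p\in P$; it is biordered with restrictions computed on representatives; its elements are written $[p_1,\dots,p_k]$ and $v\mathcal C(P)=P$. \textbf{Chained projection categories.} An evaluation map for a projection category $(P,\mathcal C)$ is a biordered morphism (functor) $\varepsilon:\mathcal C(P)\to\mathcal C$ with $\varepsilon[p]=p$ for all $p\in P$. For $b\in\mathcal C(q,r)$ and $p,s\in P$ put $e=s\Delta_b\delta_p$, $e_1=s\Delta_b\delta_{p\theta_q}$, $e_2=p\theta_{s\Delta_b}$, $f=p\Theta_b\theta_s$, $f_1=s\delta_{p\Theta_b}$, $f_2=p\Theta_b\theta_{s\delta_r}$; then $e\,\mathscr F\,e_1$, $e\,\mathscr F\,e_2$, $f_1\,\mathscr F\,f$, $f_2\,\mathscr F\,f$ and the following morphisms are defined: $\lambda(p,b,s)=\varepsilon[e,e_1]\circ({}_{p\theta_q}\lfloor b)\rfloor_{f_1}\circ\varepsilon[f_1,f]$ and $\rho(p,b,s)=\varepsilon[e,e_2]\circ{}_{e_2}\lfloor(b\rfloor_{s\delta_r})\circ\varepsilon[f_2,f]$. A chained projection category is a triple $(P,\mathcal C,\varepsilon)$ with $(P,\mathcal C)$ a projection category, $\varepsilon$ an evaluation map, and (C2) $\lambda(p,b,s)=\rho(p,b,s)$ for all $b\in\mathcal C$, $p,s\in P$. A chained projection functor $(P,\mathcal C,\varepsilon)\to(P',\mathcal C',\varepsilon')$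 is a biordered morphism $\phi:\mathcal C\to\mathcal C'$ whose restriction to objects is a projection algebra morphism $P\to P'$ and with $(\varepsilon[p_1,\dots,p_k])\phi=\varepsilon'[p_1\phi,\dots,p_k\phi]$. $\mathbf{CPC}$ is the category of chained projection categories and chained projection functors. *)

theory Defs
  imports Main "HOL-Library.FuncSet"
begin

text \<open>A category is presented by a predicate of objects, hom-sets, identities and
  composition; comp X Y Z g f is the composite of f : X -> Y followed by g : Y -> Z.\<close>

definition is_functor ::
  "('o1 \<Rightarrow> bool) \<Rightarrow> ('o1 \<Rightarrow> 'o1 \<Rightarrow> 'm1 set) \<Rightarrow> ('o1 \<Rightarrow> 'm1) \<Rightarrow>
   ('o1 \<Rightarrow> 'o1 \<Rightarrow> 'o1 \<Rightarrow> 'm1 \<Rightarrow> 'm1 \<Rightarrow> 'm1) \<Rightarrow>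
   ('o2 \<Rightarrow> bool) \<Rightarrow> ('o2 \<Rightarrow> 'o2 \<Rightarrow> 'm2 set) \<Rightarrow> ('o2 \<Rightarrow> 'm2) \<Rightarrow>
   ('o2 \<Rightarrow> 'o2 \<Rightarrow> 'o2 \<Rightarrow> 'm2 \<Rightarrow> 'm2 \<Rightarrow> 'm2) \<Rightarrow>
   ('o1 \<Rightarrow> 'o2) \<Rightarrow> ('o1 \<Rightarrow> 'o1 \<Rightarrow> 'm1 \<Rightarrow> 'm2) \<Rightarrow> bool" where
  "is_functor ob1 hom1 id1 comp1 ob2 hom2 id2 comp2 Fo Fm \<longleftrightarrow>
     (\<forall>X. ob1 X \<longrightarrow> ob2 (Fo X)) \<and>
     (\<forall>X Y f. ob1 X \<and> ob1 Y \<and> f \<in> hom1 X Y \<longrightarrow> Fm X Y f \<in> hom2 (Fo X) (Fo Y)) \<and>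
     (\<forall>X. ob1 X \<longrightarrow> Fm X X (id1 X) = id2 (Fo X)) \<and>
     (\<forall>X Y Z f g. ob1 X \<and> ob1 Y \<and> ob1 Z \<and> f \<in> hom1 X Y \<and> g \<in> hom1 Y Z \<longrightarrow>
        Fm X Z (comp1 X Y Z g f) = comp2 (Fo X) (Fo Y) (Fo Z) (Fm Y Z g) (Fm X Y f))"

definition isomorphic_categories ::
  "('o1 \<Rightarrow> bool) \<Rightarrow> ('o1 \<Rightarrow> 'o1 \<Rightarrow> 'm1 set) \<Rightarrow> ('o1 \<Rightarrow> 'm1) \<Rightarrow>
   ('o1 \<Rightarrow> 'o1 \<Rightarrow> 'o1 \<Rightarrow> 'm1 \<Rightarrow> 'm1 \<Rightarrow> 'm1) \<Rightarrow>
   ('o2 \<Rightarrow> bool) \<Rightarrow> ('o2 \<Rightarrow> 'o2 \<Rightarrow> 'm2 set) \<Rightarrow> ('o2 \<Rightarrow> 'm2) \<Rightarrow>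
   ('o2 \<Rightarrow> 'o2 \<Rightarrow> 'o2 \<Rightarrow> 'm2 \<Rightarrow> 'm2 \<Rightarrow> 'm2) \<Rightarrow> bool" where
  "isomorphic_categories ob1 hom1 id1 comp1 ob2 hom2 id2 comp2 \<longleftrightarrow>
     (\<exists>Fo Fm Go Gm.
        is_functor ob1 hom1 id1 comp1 ob2 hom2 id2 comp2 Fo Fm \<and>
        is_functor ob2 hom2 id2 comp2 ob1 hom1 id1 comp1 Go Gm \<and>
        (\<forall>X. ob1 X \<longrightarrow> Go (Fo X) = X) \<and>
        (\<forall>X. ob2 X \<longrightarrow> Fo (Go X) = X) \<and>
        (\<forall>X Y f. ob1 X \<and> ob1 Y \<and> f \<in> hom1 X Y \<longrightarrow> Gm (Fo X) (Fo Y) (Fm X Y f) = f) \<and>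
        (\<forall>X Y f. ob2 X \<and> ob2 Y \<and> f \<in> hom2 X Y \<longrightarrow> Fm (Go X) (Go Y) (Gm X Y f) = f))"

text \<open>Carrier-based presentation; operations are normalised to undefined outside the
  carrier so that structures are determined by their data on the carrier.\<close>

record 'a drc =
  drc_carrier :: "'a set"
  drc_mult :: "'a \<Rightarrow> 'a \<Rightarrow> 'a"
  drc_D :: "'a \<Rightarrow> 'a"
  drc_R :: "'a \<Rightarrow> 'a"

definition is_drc :: "'a drc \<Rightarrow> bool" where
  "is_drc S \<longleftrightarrow>
     (let A = drc_carrier S; m = drc_mult S; D = drc_D S; R = drc_R S in
       (\<forall>a\<in>A. \<forall>b\<in>A. m a b \<in> A) \<and> (\<forall>a\<in>A. D a \<in> A \<and> R a \<in> A) \<and>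
       (\<forall>a\<in>A. \<forall>b\<in>A. \<forall>c\<in>A. m (m a b) c = m a (m b c)) \<and>
       (\<forall>a\<in>A. m (D a) a = a \<and> m a (R a) = a) \<and>
       (\<forall>a\<in>A. \<forall>b\<in>A. D (m a b) = D (m a (D b)) \<and> R (m a b) = R (m (R a) b)) \<and>
       (\<forall>a\<in>A. \<forall>b\<in>A. D (m a b) = m (m (D a) (D (m a b))) (D a) \<and>
                       R (m a b) = m (m (R b) (R (m a b))) (R b)) \<and>
       (\<forall>a\<in>A. R (D a) = D a \<and> D (R a) = R a) \<and>
       (\<forall>a b. a \<notin> A \<or> b \<notin> A \<longrightarrow> m a b = undefined) \<and>
       (\<forall>a. a \<notin> A \<longrightarrow> D a = undefined \<and> R a = undefined))"

definition drc_hom :: "'a drc \<Rightarrow> 'a drc \<Rightarrow> ('a \<Rightarrow> 'a) set" where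
  "drc_hom S T = {f. f \<in> drc_carrier S \<rightarrow>\<^sub>E drc_carrier T \<and>
      (\<forall>a\<in>drc_carrier S. \<forall>b\<in>drc_carrier S. f (drc_mult S a b) = drc_mult T (f a) (f b)) \<and>
      (\<forall>a\<in>drc_carrier S. f (drc_D S a) = drc_D T (f a) \<and> f (drc_R S a) = drc_R T (f a))}"

definition drc_id :: "'a drc \<Rightarrow> 'a \<Rightarrow> 'a" where
  "drc_id S = (\<lambda>x\<in>drc_carrier S. x)"

definition drc_comp :: "'a drc \<Rightarrow> 'a drc \<Rightarrow> 'a drc \<Rightarrow> ('a \<Rightarrow> 'a) \<Rightarrow> ('a \<Rightarrow> 'a) \<Rightarrow> 'a \<Rightarrow> 'a" where
  "drc_comp S T U g f = compose (drc_carrier S) g f"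

text \<open>th p q stands for q theta_p and de p q for q delta_p.\<close>

definition proj_le :: "('a \<Rightarrow> 'a \<Rightarrow> 'a) \<Rightarrow> 'a \<Rightarrow> 'a \<Rightarrow> bool" where
  "proj_le th p q \<longleftrightarrow> p = th q p"

definition proj_F :: "('a \<Rightarrow> 'a \<Rightarrow> 'a) \<Rightarrow> ('a \<Rightarrow> 'a \<Rightarrow> 'a) \<Rightarrow> 'a \<Rightarrow> 'a \<Rightarrow> bool" where
  "proj_F th de p q \<longleftrightarrow> p = de p q \<and> q = th q p"

definition projection_algebra :: "'a set \<Rightarrow> ('a \<Rightarrow> 'a \<Rightarrow> 'a) \<Rightarrow> ('a \<Rightarrow> 'a \<Rightarrow> 'a) \<Rightarrow> bool" where
  "projection_algebra P th de \<longleftrightarrow>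
     (\<forall>p\<in>P. \<forall>q\<in>P. th p q \<in> P \<and> de p q \<in> P) \<and>
     (\<forall>p\<in>P. th p p = p \<and> de p p = p) \<and>
     (\<forall>p\<in>P. \<forall>q\<in>P. th (th p q) p = th p q \<and> de (de p q) p = de p q) \<and>
     (\<forall>p\<in>P. \<forall>q\<in>P. \<forall>x\<in>P. th (th p q) (th q x) = th p (th q x) \<and>
                            de (de p q) (de q x) = de p (de q x)) \<and>
     (\<forall>p\<in>P. \<forall>x\<in>P. de p (th p x) = th p x \<and> th p (de p x) = de p x) \<and>
     (\<forall>p\<in>P. \<forall>q\<in>P. \<forall>x\<in>P. th p (th (de q p) x) = th p (th q x) \<and>
                            de p (de (th q p) x) = de p (de q x))"

text \<open>Morphisms of the category are elements of cpc_mor; objects are identified with identity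
  morphisms (the image of the domain map); composition cpc_comp a b is a then b
  (defined when cod a = dom b).\<close>

record 'a cpc =
  cpc_mor :: "'a set"
  cpc_dom :: "'a \<Rightarrow> 'a"
  cpc_cod :: "'a \<Rightarrow> 'a"
  cpc_comp :: "'a \<Rightarrow> 'a \<Rightarrow> 'a"
  cpc_lel :: "'a \<Rightarrow> 'a \<Rightarrow> bool"
  cpc_ler :: "'a \<Rightarrow> 'a \<Rightarrow> bool"
  cpc_theta :: "'a \<Rightarrow> 'a \<Rightarrow> 'a"
  cpc_delta :: "'a \<Rightarrow> 'a \<Rightarrow> 'a"
  cpc_eps :: "'a list \<Rightarrow> 'a"

definition cpc_obj :: "'a cpc \<Rightarrow> 'a set" where
  "cpc_obj C = cpc_dom C ` cpc_mor C"

definition small_category :: "'a cpc \<Rightarrow> bool" where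
  "small_category C \<longleftrightarrow>
     (let M = cpc_mor C; d = cpc_dom C; r = cpc_cod C; c = cpc_comp C in
       (\<forall>a\<in>M. d a \<in> M \<and> r a \<in> M) \<and>
       (\<forall>a\<in>M. d (d a) = d a \<and> r (d a) = d a \<and> d (r a) = r a \<and> r (r a) = r a) \<and>
       (\<forall>a\<in>M. \<forall>b\<in>M. r a = d b \<longrightarrow> c a b \<in> M \<and> d (c a b) = d a \<and> r (c a b) = r b) \<and>
       (\<forall>a\<in>M. c (d a) a = a \<and> c a (r a) = a) \<and>
       (\<forall>a\<in>M. \<forall>b\<in>M. \<forall>e\<in>M. r a = d b \<and> r b = d e \<longrightarrow> c (c a b) e = c a (c b e)) \<and>
       (\<forall>a. a \<notin> M \<longrightarrow> d a = undefined \<and> r a = undefined) \<and>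
       (\<forall>a b. \<not> (a \<in> M \<and> b \<in> M \<and> r a = d b) \<longrightarrow> c a b = undefined))"

definition partial_order_on_mor :: "'a set \<Rightarrow> ('a \<Rightarrow> 'a \<Rightarrow> bool) \<Rightarrow> bool" where
  "partial_order_on_mor M le \<longleftrightarrow>
     (\<forall>x y. le x y \<longrightarrow> x \<in> M \<and> y \<in> M) \<and> (\<forall>x\<in>M. le x x) \<and>
     (\<forall>x y. le x y \<and> le y x \<longrightarrow> x = y) \<and> (\<forall>x y z. le x y \<and> le y z \<longrightarrow> le x z)"

definition ordered_category_common :: "'a cpc \<Rightarrow> ('a \<Rightarrow> 'a \<Rightarrow> bool) \<Rightarrow> bool" where
  "ordered_category_common C le \<longleftrightarrow>
     partial_order_on_mor (cpc_mor C) le \<and>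
     (\<forall>a b. le a b \<longrightarrow> le (cpc_dom C a) (cpc_dom C b) \<and> le (cpc_cod C a) (cpc_cod C b)) \<and>
     (\<forall>a b e e'. le a b \<and> le e e' \<and> cpc_cod C a = cpc_dom C e \<and> cpc_cod C b = cpc_dom C e' \<longrightarrow>
        le (cpc_comp C a e) (cpc_comp C b e'))"

definition left_ordered :: "'a cpc \<Rightarrow> bool" where
  "left_ordered C \<longleftrightarrow> ordered_category_common C (cpc_lel C) \<and>
     (\<forall>a\<in>cpc_mor C. \<forall>p\<in>cpc_obj C. cpc_lel C p (cpc_dom C a) \<longrightarrow>
        (\<exists>!u. cpc_lel C u a \<and> cpc_dom C u = p))"

definition right_ordered :: "'a cpc \<Rightarrow> bool" where
  "right_ordered C \<longleftrightarrow> ordered_category_common C (cpc_ler C) \<and>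
     (\<forall>a\<in>cpc_mor C. \<forall>q\<in>cpc_obj C. cpc_ler C q (cpc_cod C a) \<longrightarrow>
        (\<exists>!v. cpc_ler C v a \<and> cpc_cod C v = q))"

definition biordered :: "'a cpc \<Rightarrow> bool" where
  "biordered C \<longleftrightarrow> small_category C \<and> left_ordered C \<and> right_ordered C \<and>
     (\<forall>p\<in>cpc_obj C. \<forall>q\<in>cpc_obj C. cpc_lel C p q \<longleftrightarrow> cpc_ler C p q)"

definition weak_projection_category :: "'a cpc \<Rightarrow> bool" where
  "weak_projection_category C \<longleftrightarrow> biordered C \<and>
     projection_algebra (cpc_obj C) (cpc_theta C) (cpc_delta C) \<and>
     (\<forall>p q. \<not> (p \<in> cpc_obj C \<and> q \<in> cpc_obj C) \<longrightarrow>
        cpc_theta C p q = undefined \<and> cpc_delta C p q = undefined) \<and>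
     (\<forall>p\<in>cpc_obj C. \<forall>q\<in>cpc_obj C.
        (cpc_lel C p q \<longleftrightarrow> proj_le (cpc_theta C) p q) \<and>
        (cpc_ler C p q \<longleftrightarrow> proj_le (cpc_theta C) p q))"

definition lres :: "'a cpc \<Rightarrow> 'a \<Rightarrow> 'a \<Rightarrow> 'a" where
  "lres C p a = (THE u. cpc_lel C u a \<and> cpc_dom C u = p)"

definition rres :: "'a cpc \<Rightarrow> 'a \<Rightarrow> 'a \<Rightarrow> 'a" where
  "rres C a q = (THE v. cpc_ler C v a \<and> cpc_cod C v = q)"

definition Theta :: "'a cpc \<Rightarrow> 'a \<Rightarrow> 'a \<Rightarrow> 'a" where
  "Theta C a x = cpc_cod C (lres C (cpc_theta C (cpc_dom C a) x) a)"

definition Delta :: "'a cpc \<Rightarrow> 'a \<Rightarrow> 'a \<Rightarrow> 'a" where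
  "Delta C a x = cpc_dom C (rres C a (cpc_delta C (cpc_cod C a) x))"

definition condition_C1 :: "'a cpc \<Rightarrow> bool" where
  "condition_C1 C \<longleftrightarrow>
     (\<forall>a\<in>cpc_mor C.
       (\<forall>q\<in>cpc_obj C. proj_le (cpc_theta C) q (cpc_cod C a) \<longrightarrow>
          (\<forall>x\<in>cpc_obj C. Theta C (rres C a q) x = cpc_theta C q (Theta C a x))) \<and>
       (\<forall>p\<in>cpc_obj C. proj_le (cpc_theta C) p (cpc_dom C a) \<longrightarrow>
          (\<forall>x\<in>cpc_obj C. Delta C (lres C p a) x = cpc_delta C p (Delta C a x))))"

definition projection_category :: "'a cpc \<Rightarrow> bool" where
  "projection_category C \<longleftrightarrow> weak_projection_category C \<and> condition_C1 C"

definition is_path :: "'a set \<Rightarrow> ('a \<Rightarrow> 'a \<Rightarrow> 'a) \<Rightarrow> ('a \<Rightarrow> 'a \<Rightarrow> 'a) \<Rightarrow> 'a list \<Rightarrow> bool" where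
  "is_path P th de xs \<longleftrightarrow> xs \<noteq> [] \<and> set xs \<subseteq> P \<and> successively (proj_F th de) xs"

text \<open>Left restriction of a path: q_1 = q, q_i = q_{i-1} theta_{p_i}
  (for q \<le> p_1 one has q theta_{p_1} = q).\<close>

fun lpath :: "('a \<Rightarrow> 'a \<Rightarrow> 'a) \<Rightarrow> 'a \<Rightarrow> 'a list \<Rightarrow> 'a list" where
  "lpath th q [] = []"
| "lpath th q (p # ps) = th p q # lpath th (th p q) ps"

text \<open>Right restriction of a path: r_k = r, r_i = r_{i+1} delta_{p_i}.\<close>

definition rpath :: "('a \<Rightarrow> 'a \<Rightarrow> 'a) \<Rightarrow> 'a \<Rightarrow> 'a list \<Rightarrow> 'a list" where
  "rpath de r xs = rev (lpath de r (rev xs))"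

text \<open>The chain category C(P) is the quotient of the path category by the congruence
  generated by (p,p) ~ (p), i.e. two paths are identified iff they agree after collapsing
  adjacent repetitions. An evaluation map (a biordered functor C(P) -> C fixing objects) is
  represented by a function on paths that is constant on these classes.\<close>

definition evaluation_map :: "'a cpc \<Rightarrow> bool" where
  "evaluation_map C \<longleftrightarrow>
     (let P = cpc_obj C; th = cpc_theta C; de = cpc_delta C; \<epsilon> = cpc_eps C;
          path = is_path P th de in
       (\<forall>xs. path xs \<longrightarrow> \<epsilon> xs \<in> cpc_mor C \<and> cpc_dom C (\<epsilon> xs) = hd xs \<and>
                           cpc_cod C (\<epsilon> xs) = last xs) \<and>
       (\<forall>xs ys. path xs \<and> path ys \<and> remdups_adj xs = remdups_adj ys \<longrightarrow> \<epsilon> xs = \<epsilon> ys) \<and>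
       (\<forall>xs ys. path xs \<and> path ys \<and> last xs = hd ys \<longrightarrow>
           \<epsilon> (xs @ tl ys) = cpc_comp C (\<epsilon> xs) (\<epsilon> ys)) \<and>
       (\<forall>p\<in>P. \<epsilon> [p] = p) \<and>
       (\<forall>xs. path xs \<longrightarrow> (\<forall>q\<in>P. proj_le th q (hd xs) \<longrightarrow>
           cpc_lel C (\<epsilon> (lpath th q xs)) (\<epsilon> xs))) \<and>
       (\<forall>xs. path xs \<longrightarrow> (\<forall>q\<in>P. proj_le th q (last xs) \<longrightarrow>
           cpc_ler C (\<epsilon> (rpath de q xs)) (\<epsilon> xs))) \<and>
       (\<forall>xs. \<not> path xs \<longrightarrow> \<epsilon> xs = undefined))"

definition lambda_map :: "'a cpc \<Rightarrow> 'a \<Rightarrow> 'a \<Rightarrow> 'a \<Rightarrow> 'a" where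
  "lambda_map C p b s =
     (let th = cpc_theta C; de = cpc_delta C; \<epsilon> = cpc_eps C; comp = cpc_comp C;
          q = cpc_dom C b;
          e = de p (Delta C b s); e1 = de (th q p) (Delta C b s);
          f = th s (Theta C b p); f1 = de (Theta C b p) s
      in comp (comp (\<epsilon> [e, e1]) (rres C (lres C (th q p) b) f1)) (\<epsilon> [f1, f]))"

definition rho_map :: "'a cpc \<Rightarrow> 'a \<Rightarrow> 'a \<Rightarrow> 'a \<Rightarrow> 'a" where
  "rho_map C p b s =
     (let th = cpc_theta C; de = cpc_delta C; \<epsilon> = cpc_eps C; comp = cpc_comp C;
          r = cpc_cod C b;
          e = de p (Delta C b s); e2 = th (Delta C b s) p;
          f = th s (Theta C b p); f2 = th (de r s) (Theta C b p)
      in comp (comp (\<epsilon> [e, e2]) (lres C e2 (rres C b (de r s)))) (\<epsilon> [f2, f]))"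

definition is_cpc :: "'a cpc \<Rightarrow> bool" where
  "is_cpc C \<longleftrightarrow> projection_category C \<and> evaluation_map C \<and>
     (\<forall>b\<in>cpc_mor C. \<forall>p\<in>cpc_obj C. \<forall>s\<in>cpc_obj C. lambda_map C p b s = rho_map C p b s)"

definition cpc_hom :: "'a cpc \<Rightarrow> 'a cpc \<Rightarrow> ('a \<Rightarrow> 'a) set" where
  "cpc_hom C C' = {\<phi>. \<phi> \<in> cpc_mor C \<rightarrow>\<^sub>E cpc_mor C' \<and>
      (\<forall>a\<in>cpc_mor C. \<phi> (cpc_dom C a) = cpc_dom C' (\<phi> a) \<and> \<phi> (cpc_cod C a) = cpc_cod C' (\<phi> a)) \<and>
      (\<forall>a\<in>cpc_mor C. \<forall>b\<in>cpc_mor C. cpc_cod C a = cpc_dom C b \<longrightarrow>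
          \<phi> (cpc_comp C a b) = cpc_comp C' (\<phi> a) (\<phi> b)) \<and>
      (\<forall>a b. cpc_lel C a b \<longrightarrow> cpc_lel C' (\<phi> a) (\<phi> b)) \<and>
      (\<forall>a b. cpc_ler C a b \<longrightarrow> cpc_ler C' (\<phi> a) (\<phi> b)) \<and>
      \<phi> ` cpc_obj C \<subseteq> cpc_obj C' \<and>
      (\<forall>p\<in>cpc_obj C. \<forall>q\<in>cpc_obj C.
          \<phi> (cpc_theta C p q) = cpc_theta C' (\<phi> p) (\<phi> q) \<and>
          \<phi> (cpc_delta C p q) = cpc_delta C' (\<phi> p) (\<phi> q)) \<and>
      (\<forall>xs. is_path (cpc_obj C) (cpc_theta C) (cpc_delta C) xs \<longrightarrow>
          cpc_eps C' (map \<phi> xs) = \<phi> (cpc_eps C xs))}"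

definition cpc_id :: "'a cpc \<Rightarrow> 'a \<Rightarrow> 'a" where
  "cpc_id C = (\<lambda>x\<in>cpc_mor C. x)"

definition cpc_fcomp :: "'a cpc \<Rightarrow> 'a cpc \<Rightarrow> 'a cpc \<Rightarrow> ('a \<Rightarrow> 'a) \<Rightarrow> ('a \<Rightarrow> 'a) \<Rightarrow> 'a \<Rightarrow> 'a" where
  "cpc_fcomp C D E g f = compose (cpc_mor C) g f"

end

theory Submission
  imports Defs
begin

text \<open>
  A DRC-semigroup S is turned into a chained projection category by keeping its elements as
  morphisms, with domain D and codomain R, composing a and b by ab only when R a = D b, and
  evaluating a path by multiplying its entries; the projections D a form the projection
  algebra, with q \<theta>_p = R (qp) and q \<delta>_p = D (pq), and the restrictions of a to
  projections p \<le> D a and q \<le> R a are the products pa and aq.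
  Conversely, a chained projection category carries the pseudo-product
  a \<bullet> b = (a restricted on the right to e) \<circ> \<epsilon>[e, f] \<circ> (b restricted on the left to f),
  where e = d(b) \<delta>_r(a) and f = r(a) \<theta>_d(b).
  Using the compatibility of restrictions with composition, associativity of \<bullet> reduces to
  the case (p \<bullet> b) \<bullet> s = p \<bullet> (b \<bullet> s) with projections p, s; the two sides compute to
  \<lambda>(p, b, s) and \<rho>(p, b, s), so associativity is exactly axiom (C2).
  The remaining DRC-axioms are routine, the two constructions are mutually inverse, and
  both act as the identity on morphisms: a map preserving products, D and R preserves
  composition, restrictions and evaluations, and vice versa.
\<close>

section \<open>Projection algebras\<close>

locale proj_alg =
  fixes P :: "'a set" and th de :: "'a \<Rightarrow> 'a \<Rightarrow> 'a"
  assumes projection_algebra: "projection_algebra P th de"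
begin

lemma proj_closed: "p\<in>P \<Longrightarrow> q\<in>P \<Longrightarrow> th p q \<in> P" "p\<in>P \<Longrightarrow> q\<in>P \<Longrightarrow> de p q \<in> P"
  using projection_algebra unfolding projection_algebra_def by auto
lemma proj_refl: "p\<in>P \<Longrightarrow> th p p = p" "p\<in>P \<Longrightarrow> de p p = p"
  using projection_algebra unfolding projection_algebra_def by auto
lemma proj_absorb:
  "p\<in>P \<Longrightarrow> q\<in>P \<Longrightarrow> th (th p q) p = th p q" "p\<in>P \<Longrightarrow> q\<in>P \<Longrightarrow> de (de p q) p = de p q"
  using projection_algebra unfolding projection_algebra_def by auto
lemma proj_assoc:
  "p\<in>P \<Longrightarrow> q\<in>P \<Longrightarrow> x\<in>P \<Longrightarrow> th (th p q) (th q x) = th p (th q x)"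
  "p\<in>P \<Longrightarrow> q\<in>P \<Longrightarrow> x\<in>P \<Longrightarrow> de (de p q) (de q x) = de p (de q x)"
  using projection_algebra unfolding projection_algebra_def by auto
lemma proj_th_de:
  "p\<in>P \<Longrightarrow> x\<in>P \<Longrightarrow> de p (th p x) = th p x" "p\<in>P \<Longrightarrow> x\<in>P \<Longrightarrow> th p (de p x) = de p x"
  using projection_algebra unfolding projection_algebra_def by auto
lemma proj_exchange:
  "p\<in>P \<Longrightarrow> q\<in>P \<Longrightarrow> x\<in>P \<Longrightarrow> th p (th (de q p) x) = th p (th q x)"
  "p\<in>P \<Longrightarrow> q\<in>P \<Longrightarrow> x\<in>P \<Longrightarrow> de p (de (th q p) x) = de p (de q x)"
  using projection_algebra unfolding projection_algebra_def by auto

lemma th_idem: "p\<in>P \<Longrightarrow> x\<in>P \<Longrightarrow> th p (th p x) = th p x"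
  by (metis proj_th_de proj_closed(1))
lemma de_idem: "p\<in>P \<Longrightarrow> x\<in>P \<Longrightarrow> de p (de p x) = de p x"
  by (metis proj_th_de proj_closed(2))
lemma de_eq_if_le: "p\<in>P \<Longrightarrow> q\<in>P \<Longrightarrow> th q p = p \<Longrightarrow> de q p = p"
  by (metis proj_th_de(1))
lemma th_le_trans: "p\<in>P \<Longrightarrow> q\<in>P \<Longrightarrow> r\<in>P \<Longrightarrow> th q p = p \<Longrightarrow> th r q = q \<Longrightarrow> th r p = p"
  by (metis proj_assoc(1))
lemma th_eq_if_ge: "p\<in>P \<Longrightarrow> q\<in>P \<Longrightarrow> th q p = p \<Longrightarrow> th p q = p"
  by (metis proj_absorb(1))
lemma de_eq_if_ge: "p\<in>P \<Longrightarrow> q\<in>P \<Longrightarrow> th q p = p \<Longrightarrow> de p q = p"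
  by (metis proj_absorb(2) proj_th_de(1))

lemma proj_F_de_th:
  assumes "r\<in>P" "q\<in>P"
  shows "proj_F th de (de r q) (th q r)"
proof -
  have "de (de r q) (th q r) = de r q"
    using assms by (smt (verit, del_insts) projection_algebra projection_algebra_def)
  moreover have "th (th q r) (de r q) = th q r"
    using assms by (metis proj_refl(1) proj_absorb(1) proj_assoc(1) proj_th_de(2)
        proj_exchange(1) proj_closed(2))
  ultimately show ?thesis unfolding proj_F_def by simp
qed

lemma proj_F_restrict_left:
  assumes "x\<in>P" "y\<in>P" "q\<in>P" "proj_F th de x y" "th x q = q"
  shows "proj_F th de q (th y q)"
proof -
  have "de q (th y q) = q"
    using assms unfolding proj_F_def
    by (metis proj_absorb(2) proj_th_de(1) proj_exchange(2) proj_closed(1) de_idem)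
  moreover have "th (th y q) q = th y q"
    using assms unfolding proj_F_def by (metis proj_absorb(1) proj_assoc(1))
  ultimately show ?thesis unfolding proj_F_def by simp
qed

lemma proj_F_restrict_right:
  assumes "x\<in>P" "y\<in>P" "q\<in>P" "proj_F th de x y" "th y q = q"
  shows "proj_F th de (de x q) q"
proof -
  have "th q (de x q) = q"
    using assms unfolding proj_F_def
    by (metis proj_absorb(1) proj_th_de(1,2) proj_exchange(1) proj_closed(1,2))
  moreover have "de (de x q) q = de x q"
    using assms unfolding proj_F_def by (metis proj_refl(2) proj_assoc(2))
  ultimately show ?thesis unfolding proj_F_def by simp
qed

text \<open>The vertices where \<lambda>(p, b, s) starts and \<rho>(p, b, s) ends, written in the form in which
  they arise from the pseudo-products (p \<bullet> b) \<bullet> s and p \<bullet> (b \<bullet> s).\<close>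

lemma lambda_source_eq:
  "p\<in>P \<Longrightarrow> q\<in>P \<Longrightarrow> z\<in>P \<Longrightarrow> th q z = z \<Longrightarrow> de (de p q) (de (th q p) z) = de p z"
  by (smt (verit) proj_refl(2) proj_absorb(2) proj_th_de(1) proj_exchange(2) proj_closed(1)
      proj_assoc(2))

lemma rho_target_eq:
  assumes s: "s\<in>P" and r: "r\<in>P" and w: "w\<in>P" and wr: "th r w = w"
  shows "th (th s r) (th (de r s) w) = th s w"
proof -
  let ?y = "th (de r s) w"
  have y: "?y \<in> P" using proj_closed r s w by blast
  have yr: "th r ?y = ?y"
    by (meson proj_closed(2) th_le_trans r s th_idem w y proj_th_de(2))
  have "th (th s r) ?y = th (th s r) (th r ?y)" using yr by simp
  also have "\<dots> = th s (th r ?y)" using proj_assoc(1)[OF s r y] .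
  also have "\<dots> = th s w" using yr proj_exchange(1)[OF s r w] wr by simp
  finally show ?thesis .
qed

end

lemma projection_algebra_cong:
  assumes "projection_algebra P th de"
    and "\<And>p q. p\<in>P \<Longrightarrow> q\<in>P \<Longrightarrow> th' p q = th p q" "\<And>p q. p\<in>P \<Longrightarrow> q\<in>P \<Longrightarrow> de' p q = de p q"
  shows "projection_algebra P th' de'"
  using assms unfolding projection_algebra_def by simp

section \<open>DRC-semigroups\<close>

fun list_mult :: "('a \<Rightarrow> 'a \<Rightarrow> 'a) \<Rightarrow> 'a list \<Rightarrow> 'a" where
  "list_mult m [] = undefined"
| "list_mult m [x] = x"
| "list_mult m (x # y # zs) = m x (list_mult m (y # zs))"

lemma list_mult_Cons: "ys \<noteq> [] \<Longrightarrow> list_mult m (x # ys) = m x (list_mult m ys)"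
  by (cases ys) auto

lemma list_mult_closed:
  "(\<And>a b. a\<in>A \<Longrightarrow> b\<in>A \<Longrightarrow> m a b \<in> A) \<Longrightarrow> xs \<noteq> [] \<Longrightarrow> set xs \<subseteq> A \<Longrightarrow> list_mult m xs \<in> A"
  by (induction m xs rule: list_mult.induct) auto

lemma list_mult_cong:
  assumes "set xs \<subseteq> A" "\<And>a b. a\<in>A \<Longrightarrow> b\<in>A \<Longrightarrow> m a b = m' a b"
    "\<And>a b. a\<in>A \<Longrightarrow> b\<in>A \<Longrightarrow> m a b \<in> A"
  shows "list_mult m xs = list_mult m' xs"
  using assms
proof (induction m xs rule: list_mult.induct)
  case (3 m x y zs)
  have "list_mult m (y # zs) \<in> A" using list_mult_closed[of A m "y # zs"] 3 by auto
  then show ?case using 3 by auto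
qed auto

lemma list_mult_map:
  assumes "\<And>a b. a\<in>A \<Longrightarrow> b\<in>A \<Longrightarrow> f (m a b) = n (f a) (f b)"
    "\<And>a b. a\<in>A \<Longrightarrow> b\<in>A \<Longrightarrow> m a b \<in> A"
  shows "xs \<noteq> [] \<Longrightarrow> set xs \<subseteq> A \<Longrightarrow> list_mult n (map f xs) = f (list_mult m xs)"
proof (induction xs rule: induct_list012)
  case (3 x y zs)
  have "list_mult m (y # zs) \<in> A" using list_mult_closed[of A m "y # zs"] assms(2) 3 by simp
  then show ?case using 3 assms(1) by simp
qed auto

locale drc_semigroup =
  fixes A :: "'a set" and m :: "'a \<Rightarrow> 'a \<Rightarrow> 'a" and D R :: "'a \<Rightarrow> 'a"
  assumes mult_closed: "a\<in>A \<Longrightarrow> b\<in>A \<Longrightarrow> m a b \<in> A"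
    and D_closed: "a\<in>A \<Longrightarrow> D a \<in> A" and R_closed: "a\<in>A \<Longrightarrow> R a \<in> A"
    and assoc: "a\<in>A \<Longrightarrow> b\<in>A \<Longrightarrow> c\<in>A \<Longrightarrow> m (m a b) c = m a (m b c)"
    and D_mult: "a\<in>A \<Longrightarrow> m (D a) a = a" and mult_R: "a\<in>A \<Longrightarrow> m a (R a) = a"
    and D_mult_D: "a\<in>A \<Longrightarrow> b\<in>A \<Longrightarrow> D (m a b) = D (m a (D b))"
    and R_R_mult: "a\<in>A \<Longrightarrow> b\<in>A \<Longrightarrow> R (m a b) = R (m (R a) b)"
    and D_sandwich: "a\<in>A \<Longrightarrow> b\<in>A \<Longrightarrow> D (m a b) = m (m (D a) (D (m a b))) (D a)"
    and R_sandwich: "a\<in>A \<Longrightarrow> b\<in>A \<Longrightarrow> R (m a b) = m (m (R b) (R (m a b))) (R b)"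
    and R_D: "a\<in>A \<Longrightarrow> R (D a) = D a" and D_R: "a\<in>A \<Longrightarrow> D (R a) = R a"
begin

lemma dual: "drc_semigroup A (\<lambda>a b. m b a) R D"
proof unfold_locales
  fix a b assume "a\<in>A" "b\<in>A"
  then show "R (m b a) = m (R a) (m (R (m b a)) (R a))" "D (m b a) = m (D b) (m (D (m b a)) (D b))"
    using R_sandwich[of b a] D_sandwich[of b a]
    by (simp_all add: assoc mult_closed R_closed D_closed)
qed (simp_all add: mult_closed D_closed R_closed assoc D_mult mult_R D_mult_D R_R_mult R_D D_R)

definition "Proj = {p\<in>A. D p = p}"

lemma D_idem: "a\<in>A \<Longrightarrow> D (D a) = D a" using D_R[OF D_closed, of a] R_D[of a] by simp
lemma R_idem: "a\<in>A \<Longrightarrow> R (R a) = R a" using R_D[OF R_closed, of a] D_R[of a] by simp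
lemma Proj_R: "p\<in>Proj \<Longrightarrow> R p = p" unfolding Proj_def using R_D by force
lemma D_Proj: "a\<in>A \<Longrightarrow> D a \<in> Proj" unfolding Proj_def by (simp add: D_idem D_closed)
lemma R_Proj: "a\<in>A \<Longrightarrow> R a \<in> Proj" unfolding Proj_def by (simp add: D_R R_closed)
lemma Proj_carrier: "p\<in>Proj \<Longrightarrow> p\<in>A" unfolding Proj_def by simp
lemma Proj_D: "p\<in>Proj \<Longrightarrow> D p = p" unfolding Proj_def by simp
lemma Proj_idem: "p\<in>Proj \<Longrightarrow> m p p = p" using D_mult[OF Proj_carrier] Proj_D by force

lemma Proj_eq_image_D: "Proj = D ` A"
  unfolding Proj_def using D_idem D_closed by (auto simp: image_iff) metis

lemma Proj_eq_R_fixed: "Proj = {p\<in>A. R p = p}"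
  unfolding Proj_def using R_D D_R by auto metis+

lemma D_comp: "a\<in>A \<Longrightarrow> b\<in>A \<Longrightarrow> R a = D b \<Longrightarrow> D (m a b) = D a"
  using D_mult_D[of a b] mult_R[of a] by simp
lemma R_comp: "a\<in>A \<Longrightarrow> b\<in>A \<Longrightarrow> R a = D b \<Longrightarrow> R (m a b) = R b"
  using R_R_mult[of a b] D_mult[of b] by simp

lemma D_absorb_left: "a\<in>A \<Longrightarrow> b\<in>A \<Longrightarrow> m (D a) (D (m a b)) = D (m a b)"
  by (smt (verit) D_sandwich D_closed R_D mult_R assoc mult_closed)
lemma D_absorb_right: "a\<in>A \<Longrightarrow> b\<in>A \<Longrightarrow> m (D (m a b)) (D a) = D (m a b)"
  by (smt (verit) D_sandwich D_idem D_closed D_mult assoc mult_closed)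
lemma Proj_mult_split: "p\<in>Proj \<Longrightarrow> q\<in>Proj \<Longrightarrow> m p q = m (D (m p q)) (R (m p q))"
  by (smt (verit) D_sandwich D_closed D_mult Proj_carrier Proj_D Proj_R R_sandwich R_closed mult_R
      assoc mult_closed)

abbreviation "drc_th \<equiv> \<lambda>p q. R (m q p)"
abbreviation "drc_de \<equiv> \<lambda>p q. D (m p q)"
abbreviation "drc_path \<equiv> is_path Proj drc_th drc_de"

lemma projection_algebra_Proj: "projection_algebra Proj drc_th drc_de"
  unfolding projection_algebra_def
proof (intro conjI ballI)
  fix p q x assume p: "p\<in>Proj" and q: "q\<in>Proj" and x: "x\<in>Proj"
  show "R (m (R (m x q)) (R (m q p))) = R (m (R (m x q)) p)"
    using p q x by (smt (verit) Proj_carrier Proj_R R_sandwich R_closed mult_R assoc mult_closed)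
  show "D (m (D (m p q)) (D (m q x))) = D (m p (D (m q x)))"
    using p q x by (smt (verit) D_sandwich D_closed D_mult Proj_carrier Proj_D assoc mult_closed)
  show "R (m (R (m x (D (m q p)))) p) = R (m (R (m x q)) p)"
    using p q x by (smt (verit, best) D_sandwich D_closed D_mult Proj_carrier Proj_D R_R_mult assoc
        mult_closed)
  have R_de: "D (m p (R (m x p))) = R (m x p)" if "p\<in>Proj" "x\<in>Proj" for p x
    using that
    by (smt (verit, del_insts) D_R D_mult Proj_carrier Proj_R R_sandwich R_Proj assoc mult_closed)
  show "D (m p (D (m (R (m p q)) x))) = D (m p (D (m q x)))"
    using p q x R_de
    by (smt (verit) D_mult_D D_absorb_left Proj_carrier Proj_D R_closed mult_R assoc mult_closed)
next
  fix p q assume p: "p\<in>Proj" and q: "q\<in>Proj"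
  show "R (m q p) \<in> Proj" "D (m p q) \<in> Proj"
    using p q by (simp_all add: R_Proj D_Proj mult_closed Proj_carrier)
  show "R (m p (R (m q p))) = R (m q p)"
    using p q by (metis Proj_carrier Proj_R R_sandwich R_Proj assoc Proj_idem mult_closed)
  show "D (m (D (m p q)) p) = D (m p q)"
    using p q by (metis D_sandwich D_idem D_absorb_left Proj_carrier Proj_D mult_closed)
  show "D (m p (R (m q p))) = R (m q p)"
    using p q by (smt (verit, del_insts) D_R D_mult Proj_carrier Proj_R R_sandwich R_Proj assoc
        mult_closed)
  show "R (m (D (m p q)) p) = D (m p q)"
    using p q by (metis D_absorb_right Proj_carrier Proj_D R_D mult_closed)
next
  fix p assume "p\<in>Proj"
  then show "R (m p p) = p" "D (m p p) = p" using Proj_idem Proj_R Proj_D by auto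
qed

sublocale Proj: proj_alg Proj drc_th drc_de
  by unfold_locales (rule projection_algebra_Proj)

definition "le p q \<longleftrightarrow> p = R (m p q)"

lemma le_iff_mult: "p\<in>Proj \<Longrightarrow> q\<in>Proj \<Longrightarrow> le p q \<longleftrightarrow> m p q = p \<and> m q p = p"
  unfolding le_def
  by (metis Proj_carrier Proj_R R_sandwich mult_R assoc Proj_idem mult_closed)
lemma le_iff_D: "p\<in>Proj \<Longrightarrow> q\<in>Proj \<Longrightarrow> le p q \<longleftrightarrow> p = D (m q p)"
  by (metis D_absorb_right Proj_carrier Proj_D Proj_R le_def Proj.proj_th_de(1))
lemma le_D_mult: "a\<in>A \<Longrightarrow> b\<in>A \<Longrightarrow> le (D (m a b)) (D a)"
  by (simp add: D_absorb_right R_D le_def mult_closed)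
lemma le_R_mult: "a\<in>A \<Longrightarrow> b\<in>A \<Longrightarrow> le (R (m a b)) (R b)"
  by (smt (verit, del_insts) R_sandwich R_idem R_closed mult_R assoc le_def mult_closed)

lemma Proj_le_refl: "p\<in>Proj \<Longrightarrow> le p p"
  using le_iff_mult Proj_idem by simp
lemma Proj_le_trans: "p\<in>Proj \<Longrightarrow> q\<in>Proj \<Longrightarrow> r\<in>Proj \<Longrightarrow> le p q \<Longrightarrow> le q r \<Longrightarrow> le p r"
  unfolding le_def using Proj.th_le_trans by metis
lemma Proj_le_antisym: "p\<in>Proj \<Longrightarrow> q\<in>Proj \<Longrightarrow> le p q \<Longrightarrow> le q p \<Longrightarrow> p = q"
  using le_iff_mult by metis

lemma D_mult_le: "p\<in>Proj \<Longrightarrow> b\<in>A \<Longrightarrow> le p (D b) \<Longrightarrow> D (m p b) = p"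
  by (metis D_mult_D D_Proj Proj_D Proj_carrier le_iff_mult)
lemma R_mult_le: "p\<in>Proj \<Longrightarrow> b\<in>A \<Longrightarrow> le p (R b) \<Longrightarrow> R (m b p) = p"
  by (metis Proj_carrier R_R_mult R_Proj le_def Proj.proj_absorb(1))

lemma Proj_mult_list_mult:
  assumes "x\<in>Proj" "set zs \<subseteq> A"
  shows "m x (list_mult m (x # zs)) = list_mult m (x # zs)"
proof (cases zs)
  case (Cons z zs')
  have "list_mult m zs \<in> A" using list_mult_closed[of A m] mult_closed assms(2) Cons by blast
  then show ?thesis using Cons assms Proj_idem Proj_carrier assoc by (metis list_mult.simps(3))
qed (use assms Proj_idem in simp)

lemma list_mult_append:
  "xs \<noteq> [] \<Longrightarrow> ys \<noteq> [] \<Longrightarrow> set xs \<subseteq> A \<Longrightarrow> set ys \<subseteq> A \<Longrightarrow>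
   list_mult m (xs @ ys) = m (list_mult m xs) (list_mult m ys)"
proof (induction xs rule: induct_list012)
  case (3 x y zs)
  have "list_mult m (y # zs) \<in> A" "list_mult m ys \<in> A"
    using 3 list_mult_closed[of A m] mult_closed by (simp_all add: subset_iff)
  then show ?case using 3 assoc by simp
qed (simp_all add: list_mult_Cons)

lemma list_mult_remdups_adj: "set xs \<subseteq> Proj \<Longrightarrow> list_mult m (remdups_adj xs) = list_mult m xs"
proof (induction xs rule: induct_list012)
  case (3 x y zs)
  have IH: "list_mult m (remdups_adj (y # zs)) = list_mult m (y # zs)" using 3 by simp
  have "set (y # zs) \<subseteq> A" using 3(3) Proj_carrier by auto
  then show ?case
    using IH Proj_mult_list_mult[of y zs] 3(3) list_mult_Cons[where ys = "remdups_adj (y # zs)" and x = x]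
    by simp
qed simp_all

lemma list_mult_path:
  "drc_path xs \<Longrightarrow> list_mult m xs \<in> A \<and> D (list_mult m xs) = hd xs \<and> R (list_mult m xs) = last xs"
proof (induction xs rule: induct_list012)
  case (3 x y zs)
  have xy: "x\<in>Proj" "y\<in>Proj" "D (m x y) = x" "R (m x y) = y"
    using 3(3) by (auto simp: is_path_def proj_F_def)
  have "drc_path (y # zs)" using 3(3) by (auto simp: is_path_def)
  then have W: "list_mult m (y # zs) \<in> A" "D (list_mult m (y # zs)) = y"
    "R (list_mult m (y # zs)) = last (y # zs)"
    using "3.IH"(2) by auto
  have x: "x\<in>A" "y\<in>A" using xy Proj_carrier by auto
  have yW: "m y (list_mult m (y # zs)) = list_mult m (y # zs)"
    using W(2) D_mult[OF W(1)] by simp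
  have "R (m x (list_mult m (y # zs))) = R (m (R (m x y)) (list_mult m (y # zs)))"
    using R_R_mult[OF mult_closed[OF x] W(1)] yW assoc[OF x W(1)] by simp
  then show ?case using xy W yW D_mult_D[OF x(1) W(1)] mult_closed[OF x(1) W(1)] by simp
qed (auto simp: is_path_def Proj_carrier Proj_D Proj_R)

lemma list_mult_rev: "xs \<noteq> [] \<Longrightarrow> set xs \<subseteq> A \<Longrightarrow> list_mult (\<lambda>a b. m b a) (rev xs) = list_mult m xs"
proof (induction xs)
  case (Cons x xs)
  interpret dual: drc_semigroup A "\<lambda>a b. m b a" R D by (rule dual)
  show ?case
  proof (cases "xs = []")
    case False
    then show ?thesis
      using dual.list_mult_append[of "rev xs" "[x]"] Cons list_mult_Cons[OF False] by simp
  qed simp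
qed simp

lemma drc_path_append:
  assumes "drc_path xs" "drc_path ys" "last xs = hd ys"
  shows "drc_path (xs @ tl ys)"
proof (cases "tl ys")
  case (Cons y2 ys')
  then obtain y where ys: "ys = y # y2 # ys'" by (cases ys) auto
  then show ?thesis using assms by (auto simp: is_path_def successively_append_iff)
qed (use assms in simp)

lemma list_mult_path_append:
  assumes px: "drc_path xs" and py: "drc_path ys" and l: "last xs = hd ys"
  shows "list_mult m (xs @ tl ys) = m (list_mult m xs) (list_mult m ys)"
proof -
  have X: "list_mult m xs \<in> A" "R (list_mult m xs) = hd ys" using list_mult_path[OF px] l by auto
  then have X': "m (list_mult m xs) (hd ys) = list_mult m xs"
    using mult_R[of "list_mult m xs"] by simp
  have sx: "xs \<noteq> []" "set xs \<subseteq> A" and sy: "ys \<noteq> []" "set ys \<subseteq> A"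
    using px py Proj_carrier by (auto simp: is_path_def)
  then obtain y ys' where ys: "ys = y # ys'" by (cases ys) auto
  show ?thesis
  proof (cases "ys' = []")
    case False
    have "list_mult m ys' \<in> A" "y \<in> A"
      using sy ys False list_mult_closed[of A m ys'] mult_closed by auto
    then show ?thesis
      using list_mult_append[OF sx(1) False sx(2)] sy ys X X' list_mult_Cons[OF False]
        assoc[of "list_mult m xs" y "list_mult m ys'", symmetric] by simp
  qed (use X' ys in simp)
qed

lemma lpath_list_mult:
  "drc_path xs \<Longrightarrow> q\<in>Proj \<Longrightarrow> le q (hd xs) \<Longrightarrow>
     drc_path (lpath drc_th q xs) \<and> hd (lpath drc_th q xs) = q \<and>
     list_mult m (lpath drc_th q xs) = m q (list_mult m xs)"
proof (induction xs arbitrary: q rule: induct_list012)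
  case (2 x)
  then have "x\<in>Proj" by (simp add: is_path_def)
  then show ?case using 2 le_iff_mult Proj_R by (simp add: is_path_def)
next
  case (3 x y zs)
  have xy: "x\<in>Proj" "y\<in>Proj" "proj_F drc_th drc_de x y"
    using 3(3) by (auto simp: is_path_def)
  have pyz: "drc_path (y # zs)" using 3(3) by (auto simp: is_path_def)
  have q: "q\<in>Proj" "le q x" using 3 by auto
  have qx: "m q x = q" "R q = q" using le_iff_mult q xy Proj_R by auto
  define q' where "q' = R (m q y)"
  have F: "proj_F drc_th drc_de q q'"
    using Proj.proj_F_restrict_left[OF xy(1,2) q(1) xy(3)] qx q'_def by simp
  have q': "q'\<in>Proj" "le q' y"
    using Proj.proj_closed(1)[OF xy(2) q(1)] Proj.th_idem[OF xy(2) q(1)]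
    by (simp_all add: q'_def le_def)
  have lp: "lpath drc_th q (x # y # zs) = q # lpath drc_th q' (y # zs)"
    using qx q' le_def q'_def by simp
  note IH = "3.IH"(2)[OF pyz q'(1), unfolded list.sel(1), OF q'(2)]
  have W: "list_mult m (y # zs) \<in> A" "set (y # zs) \<subseteq> A"
    using list_mult_path[OF pyz] xy 3(3) Proj_carrier by (auto simp: is_path_def)
  have "D (m q y) = D (m q (m x y))" using qx assoc q xy Proj_carrier by metis
  also have "\<dots> = q"
    using D_mult_D[of q "m x y"] xy qx q Proj_carrier Proj_D mult_closed by (simp add: proj_F_def)
  finally have "m q q' = m q y"
    using Proj_mult_split[OF q(1) xy(2)] by (simp add: q'_def)
  have ne: "lpath drc_th q' (y # zs) \<noteq> []" by simp
  have "list_mult m (lpath drc_th q (x # y # zs)) = m q (m q' (list_mult m (y # zs)))"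
    using lp list_mult_Cons[OF ne, of m q] IH by (simp del: lpath.simps)
  also have "\<dots> = m q (m y (list_mult m (y # zs)))"
    using assoc q q' xy Proj_carrier W \<open>m q q' = m q y\<close> by metis
  also have "\<dots> = m (m q x) (list_mult m (y # zs))"
    using Proj_mult_list_mult[of y zs] xy W qx by simp
  also have "\<dots> = m q (list_mult m (x # y # zs))"
    using assoc q xy Proj_carrier W by simp
  finally show ?case
    using lp IH F q by (cases "lpath drc_th q' (y # zs)") (auto simp: is_path_def)
qed (simp add: is_path_def)

lemma rpath_list_mult:
  assumes p: "drc_path xs" and q: "q\<in>Proj" and le: "le q (last xs)"
  shows "drc_path (rpath drc_de q xs) \<and> last (rpath drc_de q xs) = q \<and>
    list_mult m (rpath drc_de q xs) = m (list_mult m xs) q"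
proof -
  interpret dual: drc_semigroup A "\<lambda>a b. m b a" R D by (rule dual)
  have Proj': "dual.Proj = Proj" unfolding dual.Proj_def using Proj_eq_R_fixed by simp
  have path': "dual.drc_path (rev xs)" using p unfolding is_path_def Proj' proj_F_def
    by (auto elim!: successively_mono)
  have lx: "last xs \<in> Proj" using p by (auto simp: is_path_def)
  have le': "dual.le q (hd (rev xs))" unfolding dual.le_def using le le_iff_D[OF q lx] p
    by (simp add: is_path_def hd_rev)
  note L = dual.lpath_list_mult[OF path' q[folded Proj'] le']
  have rp: "rpath drc_de q xs = rev (lpath drc_de q (rev xs))" by (simp add: rpath_def)
  have ne: "lpath drc_de q (rev xs) \<noteq> []" "set (lpath drc_de q (rev xs)) \<subseteq> A"
    using L Proj' Proj_carrier by (auto simp: is_path_def)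
  have "list_mult m (rpath drc_de q xs) = list_mult (\<lambda>a b. m b a) (lpath drc_de q (rev xs))"
    using list_mult_rev[of "rev (lpath drc_de q (rev xs))"] rp ne by simp
  also have "\<dots> = m (list_mult m xs) q"
  proof -
    have "list_mult (\<lambda>a b. m b a) (rev xs) = list_mult m xs"
      using list_mult_rev[of xs] p Proj_carrier by (auto simp: is_path_def)
    then show ?thesis using L by simp
  qed
  finally show ?thesis using L rp unfolding is_path_def Proj' proj_F_def
    by (auto simp: last_rev elim!: successively_mono)
qed

end

locale normal_drc = drc_semigroup +
  assumes mult_undefined: "a \<notin> A \<or> b \<notin> A \<Longrightarrow> m a b = undefined"
    and D_undefined: "a \<notin> A \<Longrightarrow> D a = undefined" and R_undefined: "a \<notin> A \<Longrightarrow> R a = undefined"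

lemma is_drc_iff_normal_drc:
  "is_drc S \<longleftrightarrow> normal_drc (drc_carrier S) (drc_mult S) (drc_D S) (drc_R S)"
proof
  assume "is_drc S"
  then show "normal_drc (drc_carrier S) (drc_mult S) (drc_D S) (drc_R S)"
    unfolding is_drc_def Let_def
    by (intro normal_drc.intro drc_semigroup.intro normal_drc_axioms.intro) blast+
next
  assume "normal_drc (drc_carrier S) (drc_mult S) (drc_D S) (drc_R S)"
  then interpret normal_drc "drc_carrier S" "drc_mult S" "drc_D S" "drc_R S" .
  show "is_drc S"
    unfolding is_drc_def Let_def
    by (intro conjI ballI allI impI; (simp add: mult_closed D_closed R_closed D_mult mult_R
        R_D D_R mult_undefined D_undefined R_undefined flip: D_mult_D R_R_mult D_sandwich R_sandwich)?)
      (simp add: assoc)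
qed
lemma (in drc_semigroup) normal_drc_restrict:
  assumes "\<And>a. a \<notin> A \<Longrightarrow> D a = undefined" "\<And>a. a \<notin> A \<Longrightarrow> R a = undefined"
  shows "normal_drc A (\<lambda>a b. if a \<in> A \<and> b \<in> A then m a b else undefined) D R"
proof unfold_locales
  fix a b c assume "a \<in> A" "b \<in> A" "c \<in> A"
  then show "(if (if a \<in> A \<and> b \<in> A then m a b else undefined) \<in> A \<and> c \<in> A
      then m (if a \<in> A \<and> b \<in> A then m a b else undefined) c else undefined) =
    (if a \<in> A \<and> (if b \<in> A \<and> c \<in> A then m b c else undefined) \<in> A
      then m a (if b \<in> A \<and> c \<in> A then m b c else undefined) else undefined)"
    by (simp add: assoc mult_closed)
next
  fix a b :: 'a assume "a \<notin> A \<or> b \<notin> A"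
  then show "(if a \<in> A \<and> b \<in> A then m a b else undefined) = undefined" by auto
qed (simp_all add: assms mult_closed D_closed R_closed D_mult mult_R D_R R_D
      flip: D_mult_D R_R_mult D_sandwich R_sandwich)

section \<open>Projection categories with an evaluation map\<close>

locale eval_proj_cat =
  fixes C :: "'a cpc"
  assumes projection_cat: "projection_category C" and evaluation: "evaluation_map C"
begin

abbreviation "M \<equiv> cpc_mor C"
abbreviation "dm \<equiv> cpc_dom C"
abbreviation "cd \<equiv> cpc_cod C"
abbreviation "cp \<equiv> cpc_comp C"
abbreviation "Ob \<equiv> cpc_obj C"
abbreviation "\<theta> \<equiv> cpc_theta C"
abbreviation "\<delta> \<equiv> cpc_delta C"
abbreviation "\<epsilon> \<equiv> cpc_eps C"
abbreviation "lel \<equiv> cpc_lel C"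
abbreviation "ler \<equiv> cpc_ler C"
abbreviation "path \<equiv> is_path Ob \<theta> \<delta>"

lemma weak: "weak_projection_category C" using projection_cat projection_category_def by blast
lemma C1: "condition_C1 C" using projection_cat projection_category_def by blast
lemma bio: "biordered C" using weak weak_projection_category_def by blast
lemma small: "small_category C" using bio biordered_def by blast
lemma left: "left_ordered C" using bio biordered_def by blast
lemma right: "right_ordered C" using bio biordered_def by blast

lemma dom_mor: "a\<in>M \<Longrightarrow> dm a \<in> M" using small unfolding small_category_def Let_def by blast
lemma cod_mor: "a\<in>M \<Longrightarrow> cd a \<in> M" using small unfolding small_category_def Let_def by blast
lemma dom_dom: "a\<in>M \<Longrightarrow> dm (dm a) = dm a" using small unfolding small_category_def Let_def by blast
lemma cod_dom: "a\<in>M \<Longrightarrow> cd (dm a) = dm a" using small unfolding small_category_def Let_def by blast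
lemma dom_cod: "a\<in>M \<Longrightarrow> dm (cd a) = cd a" using small unfolding small_category_def Let_def by blast
lemma cod_cod: "a\<in>M \<Longrightarrow> cd (cd a) = cd a" using small unfolding small_category_def Let_def by blast
lemma comp_mor: "a\<in>M \<Longrightarrow> b\<in>M \<Longrightarrow> cd a = dm b \<Longrightarrow> cp a b \<in> M"
  using small unfolding small_category_def Let_def by blast
lemma dom_comp: "a\<in>M \<Longrightarrow> b\<in>M \<Longrightarrow> cd a = dm b \<Longrightarrow> dm (cp a b) = dm a"
  using small unfolding small_category_def Let_def by blast
lemma cod_comp: "a\<in>M \<Longrightarrow> b\<in>M \<Longrightarrow> cd a = dm b \<Longrightarrow> cd (cp a b) = cd b"
  using small unfolding small_category_def Let_def by blast
lemma comp_dom_left: "a\<in>M \<Longrightarrow> cp (dm a) a = a"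
  using small unfolding small_category_def Let_def by blast
lemma comp_cod_right: "a\<in>M \<Longrightarrow> cp a (cd a) = a"
  using small unfolding small_category_def Let_def by blast
lemma comp_assoc: "a\<in>M \<Longrightarrow> b\<in>M \<Longrightarrow> e\<in>M \<Longrightarrow> cd a = dm b \<Longrightarrow> cd b = dm e \<Longrightarrow>
   cp (cp a b) e = cp a (cp b e)" using small unfolding small_category_def Let_def by blast
lemma dom_undefined: "a\<notin>M \<Longrightarrow> dm a = undefined"
  using small unfolding small_category_def Let_def by blast
lemma cod_undefined: "a\<notin>M \<Longrightarrow> cd a = undefined"
  using small unfolding small_category_def Let_def by blast
lemma comp_undefined: "\<not> (a\<in>M \<and> b\<in>M \<and> cd a = dm b) \<Longrightarrow> cp a b = undefined"
  using small unfolding small_category_def Let_def by blast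

lemma Ob_eq: "Ob = dm ` M" by (simp add: cpc_obj_def)
lemma dom_Ob: "a\<in>M \<Longrightarrow> dm a \<in> Ob" by (simp add: cpc_obj_def)
lemma cod_Ob: "a\<in>M \<Longrightarrow> cd a \<in> Ob" by (metis cod_mor dom_Ob dom_cod)
lemma Ob_mor: "p\<in>Ob \<Longrightarrow> p\<in>M" using dom_mor by (auto simp: cpc_obj_def)
lemma Ob_dom: "p\<in>Ob \<Longrightarrow> dm p = p" using dom_dom by (auto simp: cpc_obj_def)
lemma Ob_cod: "p\<in>Ob \<Longrightarrow> cd p = p" using cod_dom by (auto simp: cpc_obj_def)

sublocale proj_alg Ob \<theta> \<delta>
  using weak unfolding weak_projection_category_def by unfold_locales blast

lemma theta_undefined: "\<not> (p\<in>Ob \<and> q\<in>Ob) \<Longrightarrow> \<theta> p q = undefined"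
  using weak unfolding weak_projection_category_def by simp
lemma delta_undefined: "\<not> (p\<in>Ob \<and> q\<in>Ob) \<Longrightarrow> \<delta> p q = undefined"
  using weak unfolding weak_projection_category_def by simp
lemma lel_Ob_iff: "p\<in>Ob \<Longrightarrow> q\<in>Ob \<Longrightarrow> lel p q \<longleftrightarrow> \<theta> q p = p"
  using weak unfolding weak_projection_category_def proj_le_def by auto
lemma ler_Ob_iff: "p\<in>Ob \<Longrightarrow> q\<in>Ob \<Longrightarrow> ler p q \<longleftrightarrow> \<theta> q p = p"
  using weak unfolding weak_projection_category_def proj_le_def by auto

lemma lel_ordered: "ordered_category_common C lel" using left left_ordered_def by blast
lemma ler_ordered: "ordered_category_common C ler" using right right_ordered_def by blast

lemma lel_mor: "lel a b \<Longrightarrow> a\<in>M \<and> b\<in>M" using lel_ordered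
  unfolding ordered_category_common_def partial_order_on_mor_def by blast
lemma lel_refl: "a\<in>M \<Longrightarrow> lel a a" using lel_ordered
  unfolding ordered_category_common_def partial_order_on_mor_def by blast
lemma lel_trans: "lel a b \<Longrightarrow> lel b e \<Longrightarrow> lel a e" using lel_ordered
  unfolding ordered_category_common_def partial_order_on_mor_def by blast
lemma lel_dom: "lel a b \<Longrightarrow> lel (dm a) (dm b)" using lel_ordered
  unfolding ordered_category_common_def by blast
lemma lel_cod: "lel a b \<Longrightarrow> lel (cd a) (cd b)" using lel_ordered
  unfolding ordered_category_common_def by blast
lemma lel_comp: "lel a b \<Longrightarrow> lel e e' \<Longrightarrow> cd a = dm e \<Longrightarrow> cd b = dm e' \<Longrightarrow> lel (cp a e) (cp b e')"
  using lel_ordered unfolding ordered_category_common_def by blast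
lemma ler_mor: "ler a b \<Longrightarrow> a\<in>M \<and> b\<in>M" using ler_ordered
  unfolding ordered_category_common_def partial_order_on_mor_def by blast
lemma ler_refl: "a\<in>M \<Longrightarrow> ler a a" using ler_ordered
  unfolding ordered_category_common_def partial_order_on_mor_def by blast
lemma ler_trans: "ler a b \<Longrightarrow> ler b e \<Longrightarrow> ler a e" using ler_ordered
  unfolding ordered_category_common_def partial_order_on_mor_def by blast
lemma ler_dom: "ler a b \<Longrightarrow> ler (dm a) (dm b)" using ler_ordered
  unfolding ordered_category_common_def by blast
lemma ler_cod: "ler a b \<Longrightarrow> ler (cd a) (cd b)" using ler_ordered
  unfolding ordered_category_common_def by blast
lemma ler_comp: "ler a b \<Longrightarrow> ler e e' \<Longrightarrow> cd a = dm e \<Longrightarrow> cd b = dm e' \<Longrightarrow> ler (cp a e) (cp b e')"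
  using ler_ordered unfolding ordered_category_common_def by blast

lemma lel_dom_le: "lel a b \<Longrightarrow> \<theta> (dm b) (dm a) = dm a"
  by (meson lel_mor lel_Ob_iff lel_dom dom_Ob)
lemma lel_cod_le: "lel a b \<Longrightarrow> \<theta> (cd b) (cd a) = cd a"
  by (meson lel_mor lel_Ob_iff lel_cod cod_Ob)
lemma ler_dom_le: "ler a b \<Longrightarrow> \<theta> (dm b) (dm a) = dm a"
  by (meson ler_mor ler_Ob_iff ler_dom dom_Ob)
lemma ler_cod_le: "ler a b \<Longrightarrow> \<theta> (cd b) (cd a) = cd a"
  by (meson ler_mor ler_Ob_iff ler_cod cod_Ob)

lemma lres_ex:
  assumes "a\<in>M" "p\<in>Ob" "\<theta> (dm a) p = p"
  shows "\<exists>!u. lel u a \<and> dm u = p"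
proof -
  have "lel p (dm a)" using lel_Ob_iff assms dom_Ob by auto
  then show ?thesis using left assms unfolding left_ordered_def by blast
qed
lemma rres_ex:
  assumes "a\<in>M" "q\<in>Ob" "\<theta> (cd a) q = q"
  shows "\<exists>!v. ler v a \<and> cd v = q"
proof -
  have "ler q (cd a)" using ler_Ob_iff assms cod_Ob by auto
  then show ?thesis using right assms unfolding right_ordered_def by blast
qed

lemma lres_props:
  assumes "a\<in>M" "p\<in>Ob" "\<theta> (dm a) p = p"
  shows "lel (lres C p a) a" "dm (lres C p a) = p" "lres C p a \<in> M"
proof -
  have "lel (lres C p a) a \<and> dm (lres C p a) = p"
    unfolding lres_def by (rule theI'[OF lres_ex[OF assms]])
  then show "lel (lres C p a) a" "dm (lres C p a) = p" "lres C p a \<in> M" using lel_mor by auto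
qed
lemma lres_uniq:
  assumes "lel u a"
  shows "lres C (dm u) a = u"
proof -
  have a: "a\<in>M" "dm u \<in> Ob" "\<theta> (dm a) (dm u) = dm u" using assms lel_mor lel_dom_le dom_Ob by auto
  show ?thesis using lres_props[OF a] lres_ex[OF a] assms by blast
qed
lemma rres_props:
  assumes "a\<in>M" "q\<in>Ob" "\<theta> (cd a) q = q"
  shows "ler (rres C a q) a" "cd (rres C a q) = q" "rres C a q \<in> M"
proof -
  have "ler (rres C a q) a \<and> cd (rres C a q) = q"
    unfolding rres_def by (rule theI'[OF rres_ex[OF assms]])
  then show "ler (rres C a q) a" "cd (rres C a q) = q" "rres C a q \<in> M" using ler_mor by auto
qed
lemma rres_uniq:
  assumes "ler u a"
  shows "rres C a (cd u) = u"
proof -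
  have a: "a\<in>M" "cd u \<in> Ob" "\<theta> (cd a) (cd u) = cd u" using assms ler_mor ler_cod_le cod_Ob by auto
  show ?thesis using rres_props[OF a] rres_ex[OF a] assms by blast
qed


lemma lres_Ob: "p\<in>Ob \<Longrightarrow> x\<in>Ob \<Longrightarrow> \<theta> p x = x \<Longrightarrow> lres C x p = x"
  using lres_uniq[of x p] lel_Ob_iff Ob_dom by auto
lemma rres_Ob: "p\<in>Ob \<Longrightarrow> x\<in>Ob \<Longrightarrow> \<theta> p x = x \<Longrightarrow> rres C p x = x"
  using rres_uniq[of x p] ler_Ob_iff Ob_cod by auto
lemma lres_dom_self: "a\<in>M \<Longrightarrow> lres C (dm a) a = a" using lres_uniq lel_refl by blast
lemma rres_cod_self: "a\<in>M \<Longrightarrow> rres C a (cd a) = a" using rres_uniq ler_refl by blast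

lemma lres_cd_le: "a\<in>M \<Longrightarrow> p\<in>Ob \<Longrightarrow> \<theta> (dm a) p = p \<Longrightarrow> \<theta> (cd a) (cd (lres C p a)) = cd (lres C p a)"
  using lres_props(1) lel_cod_le by blast
lemma rres_dm_le: "a\<in>M \<Longrightarrow> q\<in>Ob \<Longrightarrow> \<theta> (cd a) q = q \<Longrightarrow> \<theta> (dm a) (dm (rres C a q)) = dm (rres C a q)"
  using rres_props(1) ler_dom_le by blast

lemma lres_lres:
  assumes "a\<in>M" "p\<in>Ob" "p'\<in>Ob" "\<theta> p' p = p" "\<theta> (dm a) p' = p'"
  shows "lres C p (lres C p' a) = lres C p a"
proof -
  have 1: "lres C p' a \<in> M" "dm (lres C p' a) = p'" "lel (lres C p' a) a"
    using lres_props assms by auto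
  have 2: "lel (lres C p (lres C p' a)) (lres C p' a)" "dm (lres C p (lres C p' a)) = p"
    using lres_props[of "lres C p' a" p] 1 assms by auto
  have "lel (lres C p (lres C p' a)) a" using 1 2 lel_trans by blast
  then show ?thesis using lres_uniq 2 by metis
qed
lemma rres_rres:
  assumes "a\<in>M" "q\<in>Ob" "q'\<in>Ob" "\<theta> q' q = q" "\<theta> (cd a) q' = q'"
  shows "rres C (rres C a q') q = rres C a q"
proof -
  have 1: "rres C a q' \<in> M" "cd (rres C a q') = q'" "ler (rres C a q') a"
    using rres_props assms by auto
  have 2: "ler (rres C (rres C a q') q) (rres C a q')" "cd (rres C (rres C a q') q) = q"
    using rres_props[of "rres C a q'" q] 1 assms by auto
  have "ler (rres C (rres C a q') q) a" using 1 2 ler_trans by blast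
  then show ?thesis using rres_uniq 2 by metis
qed

lemma lres_comp:
  assumes "x\<in>M" "y\<in>M" "cd x = dm y" "p\<in>Ob" "\<theta> (dm x) p = p"
  shows "lres C p (cp x y) = cp (lres C p x) (lres C (cd (lres C p x)) y)"
proof -
  let ?u = "lres C p x"
  have u: "?u \<in> M" "lel ?u x" "dm ?u = p" using lres_props assms by auto
  have "\<theta> (cd x) (cd ?u) = cd ?u" using lel_cod_le u(2) by blast
  then have cu: "cd ?u \<in> Ob" "\<theta> (dm y) (cd ?u) = cd ?u" using u cod_Ob assms(3) by auto
  let ?v = "lres C (cd ?u) y"
  have v: "?v \<in> M" "lel ?v y" "dm ?v = cd ?u" using lres_props[OF assms(2) cu] by auto
  have "lel (cp ?u ?v) (cp x y)" using lel_comp u v assms by auto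
  moreover have "dm (cp ?u ?v) = p" using dom_comp u v by auto
  ultimately show ?thesis using lres_uniq by metis
qed
lemma rres_comp:
  assumes "x\<in>M" "y\<in>M" "cd x = dm y" "q\<in>Ob" "\<theta> (cd y) q = q"
  shows "rres C (cp x y) q = cp (rres C x (dm (rres C y q))) (rres C y q)"
proof -
  let ?v = "rres C y q"
  have v: "?v \<in> M" "ler ?v y" "cd ?v = q" using rres_props assms by auto
  have "\<theta> (dm y) (dm ?v) = dm ?v" using ler_dom_le v(2) by blast
  then have dv: "dm ?v \<in> Ob" "\<theta> (cd x) (dm ?v) = dm ?v" using v dom_Ob assms(3) by auto
  let ?u = "rres C x (dm ?v)"
  have u: "?u \<in> M" "ler ?u x" "cd ?u = dm ?v" using rres_props[OF assms(1) dv] by auto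
  have "ler (cp ?u ?v) (cp x y)" using ler_comp u v assms by auto
  moreover have "cd (cp ?u ?v) = q" using cod_comp u v by auto
  ultimately show ?thesis using rres_uniq by metis
qed

lemma eps_props:
  assumes "path xs" shows "\<epsilon> xs \<in> M" "dm (\<epsilon> xs) = hd xs" "cd (\<epsilon> xs) = last xs"
  using assms evaluation unfolding evaluation_map_def Let_def by blast+
lemma eps_remdups_adj: "path xs \<Longrightarrow> path ys \<Longrightarrow> remdups_adj xs = remdups_adj ys \<Longrightarrow> \<epsilon> xs = \<epsilon> ys"
  using evaluation unfolding evaluation_map_def Let_def by blast
lemma eps_append:
  "path xs \<Longrightarrow> path ys \<Longrightarrow> last xs = hd ys \<Longrightarrow> \<epsilon> (xs @ tl ys) = cp (\<epsilon> xs) (\<epsilon> ys)"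
  using evaluation unfolding evaluation_map_def Let_def by blast
lemma eps_single: "p\<in>Ob \<Longrightarrow> \<epsilon> [p] = p"
  using evaluation unfolding evaluation_map_def Let_def by blast
lemma eps_lpath_lel: "path xs \<Longrightarrow> q\<in>Ob \<Longrightarrow> \<theta> (hd xs) q = q \<Longrightarrow> lel (\<epsilon> (lpath \<theta> q xs)) (\<epsilon> xs)"
  using evaluation unfolding evaluation_map_def Let_def proj_le_def by metis
lemma eps_rpath_ler: "path xs \<Longrightarrow> q\<in>Ob \<Longrightarrow> \<theta> (last xs) q = q \<Longrightarrow> ler (\<epsilon> (rpath \<delta> q xs)) (\<epsilon> xs)"
  using evaluation unfolding evaluation_map_def Let_def proj_le_def by metis
lemma eps_undefined: "\<not> path xs \<Longrightarrow> \<epsilon> xs = undefined"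
  using evaluation unfolding evaluation_map_def Let_def by blast

lemma path_pair_iff: "x\<in>Ob \<Longrightarrow> y\<in>Ob \<Longrightarrow> path [x,y] \<longleftrightarrow> proj_F \<theta> \<delta> x y"
  unfolding is_path_def by auto
lemma path_single: "x\<in>Ob \<Longrightarrow> path [x]" by (simp add: is_path_def)
lemma eps_loop: "p\<in>Ob \<Longrightarrow> \<epsilon> [p,p] = p"
  using eps_remdups_adj[of "[p,p]" "[p]"] eps_single path_single
  by (simp add: is_path_def proj_F_def proj_refl)

lemma lres_eps_pair:
  assumes "x\<in>Ob" "y\<in>Ob" "path [x,y]" "q\<in>Ob" "\<theta> x q = q"
  shows "lres C q (\<epsilon> [x,y]) = \<epsilon> [q, \<theta> y q]" "path [q, \<theta> y q]"
proof -
  show ip: "path [q, \<theta> y q]"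
    using proj_F_restrict_left[OF assms(1,2,4) _ assms(5)] path_pair_iff proj_closed(1) assms
    by simp
  have "lpath \<theta> q [x,y] = [q, \<theta> y q]" using assms(5) by simp
  then have "lel (\<epsilon> [q, \<theta> y q]) (\<epsilon> [x,y])" using eps_lpath_lel[OF assms(3,4)] assms(5) by simp
  then show "lres C q (\<epsilon> [x,y]) = \<epsilon> [q, \<theta> y q]" using lres_uniq eps_props(2)[OF ip] by force
qed

lemma rres_eps_pair:
  assumes "x\<in>Ob" "y\<in>Ob" "path [x,y]" "q\<in>Ob" "\<theta> y q = q"
  shows "rres C (\<epsilon> [x,y]) q = \<epsilon> [\<delta> x q, q]" "path [\<delta> x q, q]"
proof -
  show ip: "path [\<delta> x q, q]"
    using proj_F_restrict_right[OF assms(1,2,4) _ assms(5)] path_pair_iff proj_closed(2) assms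
    by simp
  have "rpath \<delta> q [x,y] = [\<delta> x q, q]" using de_eq_if_le assms(2,4,5) by (simp add: rpath_def)
  then have "ler (\<epsilon> [\<delta> x q, q]) (\<epsilon> [x,y])" using eps_rpath_ler[OF assms(3,4)] assms(5) by simp
  then show "rres C (\<epsilon> [x,y]) q = \<epsilon> [\<delta> x q, q]" using rres_uniq eps_props(3)[OF ip] by force
qed
end

section \<open>The pseudo-product of a chained projection category\<close>

definition cpc_prod :: "'a cpc \<Rightarrow> 'a \<Rightarrow> 'a \<Rightarrow> 'a" where
  "cpc_prod C a b = (let e = cpc_delta C (cpc_cod C a) (cpc_dom C b);
                        f = cpc_theta C (cpc_dom C b) (cpc_cod C a)
                    in cpc_comp C (cpc_comp C (rres C a e) (cpc_eps C [e, f])) (lres C f b))"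

context eval_proj_cat begin

lemma cpc_prod_parts:
  assumes a: "a\<in>M" and b: "b\<in>M"
  defines "e \<equiv> \<delta> (cd a) (dm b)" and "f \<equiv> \<theta> (dm b) (cd a)"
  shows "e\<in>Ob" "f\<in>Ob" "\<theta> (cd a) e = e" "\<theta> (dm b) f = f" "path [e,f]"
    "rres C a e \<in> M" "cd (rres C a e) = e" "lres C f b \<in> M" "dm (lres C f b) = f"
    "cpc_prod C a b = cp (cp (rres C a e) (\<epsilon> [e,f])) (lres C f b)"
    "cpc_prod C a b \<in> M" "dm (cpc_prod C a b) = dm (rres C a e)" "cd (cpc_prod C a b) = cd (lres C f b)"
    "\<epsilon> [e,f] \<in> M" "dm (\<epsilon> [e,f]) = e" "cd (\<epsilon> [e,f]) = f"
proof -
  have ca: "cd a \<in> Ob" and db: "dm b \<in> Ob" using a b cod_Ob dom_Ob by auto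
  show e: "e\<in>Ob" and f: "f\<in>Ob" unfolding e_def f_def using proj_closed ca db by auto
  show ea: "\<theta> (cd a) e = e" unfolding e_def using proj_th_de(2)[OF ca db] .
  show fb: "\<theta> (dm b) f = f" unfolding f_def using th_idem[OF db ca] .
  show ip: "path [e,f]"
    using path_pair_iff[OF e f] proj_F_de_th[OF ca db] by (simp add: e_def f_def)
  show r1: "rres C a e \<in> M" "cd (rres C a e) = e" using rres_props[OF a e ea] by auto
  show l1: "lres C f b \<in> M" "dm (lres C f b) = f" using lres_props[OF b f fb] by auto
  show eq: "cpc_prod C a b = cp (cp (rres C a e) (\<epsilon> [e,f])) (lres C f b)"
    unfolding cpc_prod_def e_def f_def Let_def ..
  show E: "\<epsilon> [e,f] \<in> M" "dm (\<epsilon> [e,f]) = e" "cd (\<epsilon> [e,f]) = f" using eps_props[OF ip] by auto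
  have c1: "cp (rres C a e) (\<epsilon> [e,f]) \<in> M" "dm (cp (rres C a e) (\<epsilon> [e,f])) = dm (rres C a e)"
     "cd (cp (rres C a e) (\<epsilon> [e,f])) = f"
    using comp_mor dom_comp cod_comp r1 E by auto
  show "cpc_prod C a b \<in> M" "dm (cpc_prod C a b) = dm (rres C a e)" "cd (cpc_prod C a b) = cd (lres C f b)"
    unfolding eq using comp_mor dom_comp cod_comp c1 l1 by auto
qed

lemma cpc_prod_mor: "a\<in>M \<Longrightarrow> b\<in>M \<Longrightarrow> cpc_prod C a b \<in> M" by (rule cpc_prod_parts(11))

lemma dom_cpc_prod_le:
  assumes "a\<in>M" "b\<in>M"
  shows "\<theta> (dm a) (dm (cpc_prod C a b)) = dm (cpc_prod C a b)"
  using cpc_prod_parts(12)[OF assms] rres_dm_le[OF assms(1) cpc_prod_parts(1)[OF assms] cpc_prod_parts(3)[OF assms]]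
  by simp
lemma cod_cpc_prod_le:
  assumes "a\<in>M" "b\<in>M"
  shows "\<theta> (cd b) (cd (cpc_prod C a b)) = cd (cpc_prod C a b)"
  using cpc_prod_parts(13)[OF assms] lres_cd_le[OF assms(2) cpc_prod_parts(2)[OF assms] cpc_prod_parts(4)[OF assms]]
  by simp

lemma cpc_prod_Ob_left:
  assumes p: "p\<in>Ob" and b: "b\<in>M"
  shows "cpc_prod C p b = cp (\<epsilon> [\<delta> p (dm b), \<theta> (dm b) p]) (lres C (\<theta> (dm b) p) b)"
proof -
  note B = cpc_prod_parts[OF Ob_mor[OF p] b, unfolded Ob_cod[OF p]]
  show ?thesis using B(10) rres_Ob[OF p B(1) B(3)] comp_dom_left[OF B(14)] B(15) by simp
qed

lemma cpc_prod_Ob_right: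
  assumes b: "b\<in>M" and s: "s\<in>Ob"
  shows "cpc_prod C b s = cp (rres C b (\<delta> (cd b) s)) (\<epsilon> [\<delta> (cd b) s, \<theta> s (cd b)])"
proof -
  note B = cpc_prod_parts[OF b Ob_mor[OF s], unfolded Ob_dom[OF s]]
  have "cp (rres C b (\<delta> (cd b) s)) (\<epsilon> [\<delta> (cd b) s, \<theta> s (cd b)]) \<in> M"
    "cd (cp (rres C b (\<delta> (cd b) s)) (\<epsilon> [\<delta> (cd b) s, \<theta> s (cd b)])) = \<theta> s (cd b)"
    using comp_mor[OF B(6) B(14)] cod_comp[OF B(6) B(14)] B(7,15,16) by auto
  then show ?thesis using B(10) lres_Ob[OF s B(2) B(4)] comp_cod_right by metis
qed

lemma cpc_prod_via_dom:
  assumes x: "x\<in>M" and c: "c\<in>M"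
  shows "cpc_prod C x c = cp (cpc_prod C x (dm c)) (lres C (cd (cpc_prod C x (dm c))) c)"
    "cd (cpc_prod C x (dm c)) = \<theta> (dm c) (cd x)"
proof -
  note B = cpc_prod_parts[OF x c]
  have "cpc_prod C x (dm c) = cp (rres C x (\<delta> (cd x) (dm c))) (\<epsilon> [\<delta> (cd x) (dm c), \<theta> (dm c) (cd x)])"
    using cpc_prod_Ob_right[OF x dom_Ob[OF c]] Ob_dom[OF dom_Ob[OF c]] by simp
  moreover have "cd (cp (rres C x (\<delta> (cd x) (dm c))) (\<epsilon> [\<delta> (cd x) (dm c), \<theta> (dm c) (cd x)]))
      = \<theta> (dm c) (cd x)"
    using cod_comp[OF B(6) B(14)] B(7,15,16) by simp
  ultimately show "cpc_prod C x c = cp (cpc_prod C x (dm c)) (lres C (cd (cpc_prod C x (dm c))) c)"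
    "cd (cpc_prod C x (dm c)) = \<theta> (dm c) (cd x)"
    using B(10) by simp_all
qed

lemma cpc_prod_via_cod:
  assumes x: "x\<in>M" and c: "c\<in>M"
  shows "cpc_prod C x c = cp (rres C x (dm (cpc_prod C (cd x) c))) (cpc_prod C (cd x) c)"
    "dm (cpc_prod C (cd x) c) = \<delta> (cd x) (dm c)"
proof -
  note B = cpc_prod_parts[OF x c]
  have w: "cpc_prod C (cd x) c = cp (\<epsilon> [\<delta> (cd x) (dm c), \<theta> (dm c) (cd x)]) (lres C (\<theta> (dm c) (cd x)) c)"
    using cpc_prod_Ob_left[OF cod_Ob[OF x] c] Ob_cod[OF cod_Ob[OF x]] by simp
  show "cpc_prod C x c = cp (rres C x (dm (cpc_prod C (cd x) c))) (cpc_prod C (cd x) c)"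
    unfolding B(10) w
      using comp_assoc[OF B(6) B(14) B(8)] dom_comp[OF B(14) B(8)] B(7,9,15,16) by simp
  show "dm (cpc_prod C (cd x) c) = \<delta> (cd x) (dm c)"
    unfolding w using dom_comp[OF B(14) B(8)] B(9) B(15,16) by simp
qed

lemma cpc_prod_comp_right:
  assumes a: "a\<in>M" and y: "y\<in>M" and z: "z\<in>M" and yz: "cd y = dm z"
  shows "cpc_prod C a (cp y z) = cp (cpc_prod C a y) (lres C (cd (cpc_prod C a y)) z)"
proof -
  have yzM: "cp y z \<in> M" "dm (cp y z) = dm y" using comp_mor dom_comp y z yz by auto
  let ?e = "\<delta> (cd a) (dm y)" and ?f = "\<theta> (dm y) (cd a)"
  note B = cpc_prod_parts[OF a y]
  note B2 = cpc_prod_parts[OF a yzM(1), unfolded yzM(2)]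
  have lc: "lres C ?f (cp y z) = cp (lres C ?f y) (lres C (cd (lres C ?f y)) z)"
    using lres_comp[OF y z yz B(2) B(4)] .
  have l2: "lres C (cd (lres C ?f y)) z \<in> M" "dm (lres C (cd (lres C ?f y)) z) = cd (lres C ?f y)"
  proof -
    have "\<theta> (cd y) (cd (lres C ?f y)) = cd (lres C ?f y)" using lres_cd_le[OF y B(2) B(4)] .
    then have "\<theta> (dm z) (cd (lres C ?f y)) = cd (lres C ?f y)" using yz by simp
    then show "lres C (cd (lres C ?f y)) z \<in> M" "dm (lres C (cd (lres C ?f y)) z) = cd (lres C ?f y)"
      using lres_props[OF z] cod_Ob B(8) by auto
  qed
  have c1: "cp (rres C a ?e) (\<epsilon> [?e,?f]) \<in> M" "cd (cp (rres C a ?e) (\<epsilon> [?e,?f])) = ?f"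
    using comp_mor cod_comp B(6,7,14,15,16) by auto
  show ?thesis
    unfolding B2(10) B(10) lc
    using comp_assoc[OF c1(1) B(8) l2(1)] cod_comp[OF c1(1) B(8)] c1(2) B(9) l2(2) by simp
qed

lemma cpc_prod_comp_left:
  assumes b: "b\<in>M" and y: "y\<in>M" and z: "z\<in>M" and yz: "cd y = dm z"
  shows "cpc_prod C (cp y z) b = cp (rres C y (dm (cpc_prod C z b))) (cpc_prod C z b)"
proof -
  have yzM: "cp y z \<in> M" "cd (cp y z) = cd z" using comp_mor cod_comp y z yz by auto
  let ?e = "\<delta> (cd z) (dm b)" and ?f = "\<theta> (dm b) (cd z)"
  note B = cpc_prod_parts[OF z b]
  note B2 = cpc_prod_parts[OF yzM(1) b, unfolded yzM(2)]
  have rc: "rres C (cp y z) ?e = cp (rres C y (dm (rres C z ?e))) (rres C z ?e)"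
    using rres_comp[OF y z yz B(1) B(3)] .
  have r2: "rres C y (dm (rres C z ?e)) \<in> M" "cd (rres C y (dm (rres C z ?e))) = dm (rres C z ?e)"
  proof -
    have "\<theta> (dm z) (dm (rres C z ?e)) = dm (rres C z ?e)" using rres_dm_le[OF z B(1) B(3)] .
    then have "\<theta> (cd y) (dm (rres C z ?e)) = dm (rres C z ?e)" using yz by simp
    then show "rres C y (dm (rres C z ?e)) \<in> M" "cd (rres C y (dm (rres C z ?e))) = dm (rres C z ?e)"
      using rres_props[OF y] dom_Ob B(6) by auto
  qed
  have c1: "cp (rres C z ?e) (\<epsilon> [?e,?f]) \<in> M" "dm (cp (rres C z ?e) (\<epsilon> [?e,?f])) = dm (rres C z ?e)"
     "cd (cp (rres C z ?e) (\<epsilon> [?e,?f])) = ?f"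
    using comp_mor cod_comp dom_comp B(6,7,14,15,16) by auto
  have "cp (cp (cp (rres C y (dm (rres C z ?e))) (rres C z ?e)) (\<epsilon> [?e,?f])) (lres C ?f b)
      = cp (cp (rres C y (dm (rres C z ?e))) (cp (rres C z ?e) (\<epsilon> [?e,?f]))) (lres C ?f b)"
    using comp_assoc[OF r2(1) B(6) B(14)] r2(2) B(7) B(15) by simp
  also have "\<dots> = cp (rres C y (dm (rres C z ?e))) (cp (cp (rres C z ?e) (\<epsilon> [?e,?f])) (lres C ?f b))"
    using comp_assoc[OF r2(1) c1(1) B(8)] r2(2) c1(2) c1(3) B(9) by simp
  finally have X: "cp (cp (cp (rres C y (dm (rres C z ?e))) (rres C z ?e)) (\<epsilon> [?e,?f])) (lres C ?f b)
      = cp (rres C y (dm (rres C z ?e))) (cp (cp (rres C z ?e) (\<epsilon> [?e,?f])) (lres C ?f b))" .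
  show ?thesis unfolding B2(10) B(10) rc using X dom_comp[OF c1(1) B(8)] c1(2,3) B(9) by simp
qed

lemma C1_Theta: "a\<in>M \<Longrightarrow> q\<in>Ob \<Longrightarrow> \<theta> (cd a) q = q \<Longrightarrow> x\<in>Ob \<Longrightarrow>
   Theta C (rres C a q) x = \<theta> q (Theta C a x)"
  using C1 unfolding condition_C1_def proj_le_def by (metis (no_types))
lemma C1_Delta: "a\<in>M \<Longrightarrow> p\<in>Ob \<Longrightarrow> \<theta> (dm a) p = p \<Longrightarrow> x\<in>Ob \<Longrightarrow>
   Delta C (lres C p a) x = \<delta> p (Delta C a x)"
  using C1 unfolding condition_C1_def proj_le_def by (metis (no_types))

lemma Theta_le: "b\<in>M \<Longrightarrow> p\<in>Ob \<Longrightarrow> Theta C b p \<in> Ob \<and> \<theta> (cd b) (Theta C b p) = Theta C b p"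
  unfolding Theta_def using cod_Ob lres_props lres_cd_le proj_closed dom_Ob th_idem by simp
lemma Delta_le: "b\<in>M \<Longrightarrow> s\<in>Ob \<Longrightarrow> Delta C b s \<in> Ob \<and> \<theta> (dm b) (Delta C b s) = Delta C b s"
  unfolding Delta_def using dom_Ob rres_props rres_dm_le proj_closed cod_Ob proj_th_de(2) by simp

lemma lambda_map_eq:
  assumes p: "p\<in>Ob" and b: "b\<in>M" and s: "s\<in>Ob"
  shows "lambda_map C p b s = cpc_prod C (cpc_prod C p b) s"
proof -
  define f0 where "f0 = \<theta> (dm b) p"
  define b' where "b' = lres C f0 b"
  define t where "t = Theta C b p"
  define z where "z = Delta C b s"
  define f1 where "f1 = \<delta> t s"
  note B = cpc_prod_parts[OF Ob_mor[OF p] b, unfolded Ob_cod[OF p], folded f0_def]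
  have b': "b' \<in> M" "dm b' = f0" "cd b' = t"
    using lres_props[OF b B(2) B(4)] by (simp_all add: b'_def t_def Theta_def f0_def)
  have pb: "cpc_prod C p b = cp (\<epsilon> [\<delta> p (dm b), f0]) b'"
    using cpc_prod_Ob_left[OF p b] by (simp add: f0_def b'_def)
  have "cpc_prod C p b \<in> M" "cd (cpc_prod C p b) = t"
    using cpc_prod_mor[OF Ob_mor[OF p] b] pb cod_comp[OF B(14) b'(1)] B(16) b'(2,3) by auto
  then have pbs: "cpc_prod C (cpc_prod C p b) s = cp (rres C (cpc_prod C p b) f1) (\<epsilon> [f1, \<theta> s t])"
    using cpc_prod_Ob_right[OF _ s] f1_def by simp
  have t: "t \<in> Ob" using Theta_le[OF b p] t_def by simp
  have f1: "f1 \<in> Ob" "\<theta> t f1 = f1" using proj_closed proj_th_de(2) t s f1_def by auto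
  have "rres C (cpc_prod C p b) f1 =
      cp (rres C (\<epsilon> [\<delta> p (dm b), f0]) (dm (rres C b' f1))) (rres C b' f1)"
    unfolding pb using rres_comp[OF B(14) b'(1) _ f1(1)] B(16) b'(2,3) f1(2) by simp
  moreover have "dm (rres C b' f1) = \<delta> f0 z"
    using C1_Delta[OF b B(2) B(4) s] b'(3) by (simp add: Delta_def b'_def z_def f1_def)
  moreover have "rres C (\<epsilon> [\<delta> p (dm b), f0]) (\<delta> f0 z) = \<epsilon> [\<delta> p z, \<delta> f0 z]"
  proof -
    have z: "z \<in> Ob" "\<theta> (dm b) z = z" using Delta_le[OF b s] z_def by auto
    then have "\<delta> f0 z \<in> Ob" "\<theta> f0 (\<delta> f0 z) = \<delta> f0 z" using proj_closed proj_th_de(2) B(2) by auto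
    then show ?thesis
      using rres_eps_pair(1)[OF B(1,2,5)] lambda_source_eq[OF p dom_Ob[OF b] z]
      by (simp add: f0_def)
  qed
  moreover have "lambda_map C p b s = cp (cp (\<epsilon> [\<delta> p z, \<delta> f0 z]) (rres C b' f1)) (\<epsilon> [f1, \<theta> s t])"
    unfolding lambda_map_def Let_def z_def f1_def t_def b'_def f0_def ..
  ultimately show ?thesis using pbs by simp
qed

lemma rho_map_eq:
  assumes p: "p\<in>Ob" and b: "b\<in>M" and s: "s\<in>Ob"
  shows "rho_map C p b s = cpc_prod C p (cpc_prod C b s)"
proof -
  define e' where "e' = \<delta> (cd b) s"
  define b'' where "b'' = rres C b e'"
  define w where "w = Theta C b p"
  define z where "z = Delta C b s"
  define e2 where "e2 = \<theta> z p"
  define mm where "mm = \<theta> e' w"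
  note B = cpc_prod_parts[OF b Ob_mor[OF s], unfolded Ob_dom[OF s], folded e'_def]
  have b'': "b''\<in>M" "cd b'' = e'" "dm b'' = z"
    using B(6,7) by (simp_all add: b''_def z_def Delta_def e'_def)
  have bs: "cpc_prod C b s = cp b'' (\<epsilon> [e', \<theta> s (cd b)])"
    using cpc_prod_Ob_right[OF b s] by (simp add: b''_def e'_def)
  have "cpc_prod C b s \<in> M" "dm (cpc_prod C b s) = z"
    using cpc_prod_mor[OF b Ob_mor[OF s]] bs dom_comp[OF b''(1) B(14)] b'' B(15) by auto
  note B2 = cpc_prod_parts[OF Ob_mor[OF p] this(1), unfolded Ob_cod[OF p] this(2), folded e2_def]
  have pbs: "cpc_prod C p (cpc_prod C b s) = cp (\<epsilon> [\<delta> p z, e2]) (lres C e2 (cpc_prod C b s))"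
    using cpc_prod_Ob_left[OF p cpc_prod_mor[OF b Ob_mor[OF s]]] \<open>dm (cpc_prod C b s) = z\<close>
    by (simp add: e2_def)
  have l1: "lres C e2 b'' \<in> M" "dm (lres C e2 b'') = e2" "cd (lres C e2 b'') = mm"
    using lres_props[OF b''(1) B2(2)] B2(4) b''(3) C1_Theta[OF b B(1) B(3) p]
    by (simp_all add: Theta_def e2_def mm_def w_def b''_def)
  have w: "w \<in> Ob" "\<theta> (cd b) w = w" using Theta_le[OF b p] w_def by auto
  have mm: "mm \<in> Ob" "\<theta> e' mm = mm" using proj_closed th_idem B(1) w(1) mm_def by auto
  have lc: "lres C e2 (cpc_prod C b s) = cp (lres C e2 b'') (\<epsilon> [mm, \<theta> s w])"
    using bs lres_comp[OF b''(1) B(14) _ B2(2)] b'' B(15) B2(4) l1(3) lres_eps_pair(1)[OF B(1,2,5) mm]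
      rho_target_eq[OF s cod_Ob[OF b] w] by (simp add: mm_def e'_def)
  have E: "\<epsilon> [mm, \<theta> s w] \<in> M" "dm (\<epsilon> [mm, \<theta> s w]) = mm"
    using eps_props[OF lres_eps_pair(2)[OF B(1,2,5) mm]] rho_target_eq[OF s cod_Ob[OF b] w]
    by (simp_all add: mm_def e'_def)
  have "rho_map C p b s = cp (cp (\<epsilon> [\<delta> p z, e2]) (lres C e2 b'')) (\<epsilon> [mm, \<theta> s w])"
    unfolding rho_map_def Let_def e2_def z_def w_def mm_def e'_def b''_def ..
  then show ?thesis
    using pbs lc comp_assoc[OF B2(14) l1(1) E(1)] B2(16) l1(2,3) E(2) by simp
qed

lemma cpc_prod_lres:
  assumes b: "b\<in>M" and p: "p\<in>Ob" and le: "\<theta> (dm b) p = p"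
  shows "cpc_prod C p b = lres C p b"
proof -
  have "\<delta> p (dm b) = p" using de_eq_if_ge[OF p dom_Ob[OF b] le] .
  then have "cpc_prod C p b = cp p (lres C p b)"
    using cpc_prod_Ob_left[OF p b] eps_loop[OF p] le by simp
  then show ?thesis
    using comp_dom_left[OF lres_props(3)[OF b p le]] lres_props(2)[OF b p le] by simp
qed

lemma cpc_prod_rres:
  assumes b: "b\<in>M" and q: "q\<in>Ob" and le: "\<theta> (cd b) q = q"
  shows "cpc_prod C b q = rres C b q"
proof -
  have "\<delta> (cd b) q = q" "\<theta> q (cd b) = q"
    using de_eq_if_le[OF q cod_Ob[OF b] le] th_eq_if_ge[OF q cod_Ob[OF b] le] by auto
  then have "cpc_prod C b q = cp (rres C b q) q"
    using cpc_prod_Ob_right[OF b q] eps_loop[OF q] by simp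
  then show ?thesis
    using comp_cod_right[OF rres_props(3)[OF b q le]] rres_props(2)[OF b q le] by simp
qed

lemma cpc_prod_comp:
  assumes a: "a\<in>M" and b: "b\<in>M" and ab: "cd a = dm b"
  shows "cpc_prod C a b = cp a b"
proof -
  have e: "\<delta> (cd a) (dm b) = cd a" and f: "\<theta> (dm b) (cd a) = cd a"
    using ab proj_refl cod_Ob[OF a] by auto
  have "cpc_prod C a b = cp (cp (rres C a (cd a)) (\<epsilon> [cd a, cd a])) (lres C (cd a) b)"
    unfolding cpc_prod_def Let_def e f ..
  also have "\<dots> = cp a b"
    using rres_cod_self[OF a] eps_loop[OF cod_Ob[OF a]] lres_dom_self[OF b] ab comp_cod_right[OF a]
    by simp
  finally show ?thesis .
qed

lemma cpc_prod_Ob: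
  assumes p: "p\<in>Ob" and q: "q\<in>Ob"
  shows "cpc_prod C p q = \<epsilon> [\<delta> p q, \<theta> q p]" "dm (cpc_prod C p q) = \<delta> p q"
    "cd (cpc_prod C p q) = \<theta> q p"
proof -
  note B = cpc_prod_parts[OF Ob_mor[OF p] Ob_mor[OF q], unfolded Ob_cod[OF p] Ob_dom[OF q]]
  show 1: "cpc_prod C p q = \<epsilon> [\<delta> p q, \<theta> q p]"
    using cpc_prod_Ob_left[OF p Ob_mor[OF q]] Ob_dom[OF q] lres_Ob[OF q B(2) B(4)]
      comp_cod_right[OF B(14)] B(16) by simp
  show "dm (cpc_prod C p q) = \<delta> p q" "cd (cpc_prod C p q) = \<theta> q p" using 1 B(15,16) by auto
qed

lemma list_mult_eps: "path xs \<Longrightarrow> list_mult (cpc_prod C) xs = \<epsilon> xs"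
proof (induction xs rule: induct_list012)
  case (2 x) then show ?case using eps_single by (simp add: is_path_def)
next
  case (3 x y zs)
  have xy: "x\<in>Ob" "y\<in>Ob" "proj_F \<theta> \<delta> x y" using 3(3) by (auto simp: is_path_def)
  have F: "\<delta> x y = x" "\<theta> y x = y" using xy(3) unfolding proj_F_def by metis+
  have p2: "path [x,y]" using xy by (simp add: is_path_def)
  have pyz: "path (y # zs)" using 3(3) by (auto simp: is_path_def)
  have W: "\<epsilon> (y # zs) \<in> M" "dm (\<epsilon> (y # zs)) = y" using eps_props[OF pyz] by auto
  have "cpc_prod C x (\<epsilon> (y # zs)) = cp (\<epsilon> [x, y]) (lres C y (\<epsilon> (y # zs)))"
    using cpc_prod_Ob_left[OF xy(1) W(1)] W(2) F by simp
  also have "\<dots> = \<epsilon> ([x,y] @ tl (y # zs))"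
    using lres_dom_self[OF W(1)] W(2) eps_append[OF p2 pyz] by simp
  finally show ?case using "3.IH"(2)[OF pyz] by simp
qed (simp add: is_path_def)

end

section \<open>The DRC-semigroup of a chained projection category\<close>

definition cpc2drc :: "'a cpc \<Rightarrow> 'a drc" where
  "cpc2drc C = \<lparr>drc_carrier = cpc_mor C,
     drc_mult = (\<lambda>a b. if a \<in> cpc_mor C \<and> b \<in> cpc_mor C then cpc_prod C a b else undefined),
     drc_D = cpc_dom C, drc_R = cpc_cod C\<rparr>"

lemma cpc2drc_simps [simp]:
  "drc_carrier (cpc2drc C) = cpc_mor C" "drc_D (cpc2drc C) = cpc_dom C"
  "drc_R (cpc2drc C) = cpc_cod C"
  "drc_mult (cpc2drc C) = (\<lambda>a b. if a \<in> cpc_mor C \<and> b \<in> cpc_mor C then cpc_prod C a b else undefined)"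
  by (simp_all add: cpc2drc_def)

locale chained_proj_cat = eval_proj_cat +
  assumes C2: "\<forall>b\<in>cpc_mor C. \<forall>p\<in>cpc_obj C. \<forall>s\<in>cpc_obj C. lambda_map C p b s = rho_map C p b s"
begin

lemma cpc_prod_assoc_Ob:
  "p\<in>Ob \<Longrightarrow> b\<in>M \<Longrightarrow> s\<in>Ob \<Longrightarrow> cpc_prod C (cpc_prod C p b) s = cpc_prod C p (cpc_prod C b s)"
  using C2 lambda_map_eq rho_map_eq by metis

lemma cpc_prod_assoc_Ob_right:
  assumes a: "a\<in>M" and b: "b\<in>M" and q: "q\<in>Ob"
  shows "cpc_prod C (cpc_prod C a b) q = cpc_prod C a (cpc_prod C b q)"
proof -
  let ?w = "cpc_prod C (cd a) b"
  have w: "?w \<in> M" using cpc_prod_mor cod_mor a b by auto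
  have dw: "dm ?w \<in> Ob" "\<theta> (cd a) (dm ?w) = dm ?w"
    using cpc_prod_via_cod(2)[OF a b] dom_Ob[OF w] proj_th_de(2) cod_Ob[OF a] dom_Ob[OF b] by auto
  let ?u = "rres C a (dm ?w)"
  have u: "?u\<in>M" "cd ?u = dm ?w" using rres_props[OF a dw] by auto
  have wq: "cpc_prod C ?w q \<in> M" using cpc_prod_mor w Ob_mor q by auto
  have "cpc_prod C (cpc_prod C a b) q = cpc_prod C (cp ?u ?w) q"
    using cpc_prod_via_cod(1)[OF a b] by simp
  also have "\<dots> = cp (rres C ?u (dm (cpc_prod C ?w q))) (cpc_prod C ?w q)"
    using cpc_prod_comp_left[OF Ob_mor[OF q] u(1) w u(2)] .
  also have "\<dots> = cp (rres C a (dm (cpc_prod C ?w q))) (cpc_prod C ?w q)"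
    using rres_rres[OF a dom_Ob[OF wq] dw(1) dom_cpc_prod_le[OF w Ob_mor[OF q]] dw(2)] by simp
  also have "\<dots> = cpc_prod C a (cpc_prod C b q)"
    using cpc_prod_via_cod(1)[OF a cpc_prod_mor[OF b Ob_mor[OF q]]]
      cpc_prod_assoc_Ob[OF cod_Ob[OF a] b q] by simp
  finally show ?thesis .
qed

lemma cpc_prod_assoc:
  assumes a: "a\<in>M" and b: "b\<in>M" and c: "c\<in>M"
  shows "cpc_prod C (cpc_prod C a b) c = cpc_prod C a (cpc_prod C b c)"
proof -
  let ?x = "cpc_prod C a b" and ?y = "cpc_prod C b (dm c)"
  have x: "?x \<in> M" and y: "?y \<in> M" using cpc_prod_mor dom_mor a b c by auto
  have cy: "cd ?y \<in> Ob" "\<theta> (dm c) (cd ?y) = cd ?y"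
    using cpc_prod_via_dom(2)[OF b c] th_idem dom_Ob[OF c] cod_Ob[OF b] proj_closed by auto
  let ?z = "lres C (cd ?y) c"
  have z: "?z \<in> M" "dm ?z = cd ?y" using lres_props[OF c cy] by auto
  have ay: "cpc_prod C a ?y \<in> M" using cpc_prod_mor a y by auto
  have "cpc_prod C ?x c = cp (cpc_prod C ?x (dm c)) (lres C (cd (cpc_prod C ?x (dm c))) c)"
    using cpc_prod_via_dom(1)[OF x c] .
  also have "\<dots> = cp (cpc_prod C a ?y) (lres C (cd (cpc_prod C a ?y)) c)"
    using cpc_prod_assoc_Ob_right[OF a b dom_Ob[OF c]] by simp
  also have "\<dots> = cp (cpc_prod C a ?y) (lres C (cd (cpc_prod C a ?y)) ?z)"
    using lres_lres[OF c cod_Ob[OF ay] cy(1) cod_cpc_prod_le[OF a y] cy(2)] by simp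
  also have "\<dots> = cpc_prod C a (cp ?y ?z)"
    using cpc_prod_comp_right[OF a y z(1) z(2)[symmetric]] by simp
  also have "\<dots> = cpc_prod C a (cpc_prod C b c)"
    using cpc_prod_via_dom(1)[OF b c] by simp
  finally show ?thesis .
qed

lemma cpc_prod_sandwich_Ob:
  assumes p: "p\<in>Ob" and x: "x\<in>Ob" and le: "\<theta> p x = x"
  shows "cpc_prod C (cpc_prod C p x) p = x"
  using cpc_prod_rres[OF Ob_mor[OF p] x] cpc_prod_lres[OF Ob_mor[OF p] x] rres_Ob[OF p x le]
    lres_Ob[OF p x le] Ob_cod[OF p] Ob_dom[OF p] le by simp

lemma drc_semigroup_cpc_prod: "drc_semigroup M (cpc_prod C) dm cd"
proof
  fix a assume a: "a\<in>M"
  show "dm a \<in> M" "cd a \<in> M" "cd (dm a) = dm a" "dm (cd a) = cd a"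
    using dom_mor cod_mor cod_dom dom_cod a by auto
  show "cpc_prod C (dm a) a = a" "cpc_prod C a (cd a) = a"
    using cpc_prod_lres[OF a dom_Ob[OF a]] cpc_prod_rres[OF a cod_Ob[OF a]] lres_dom_self[OF a]
      rres_cod_self[OF a] proj_refl dom_Ob cod_Ob a by simp_all
next
  fix a b assume a: "a\<in>M" and b: "b\<in>M"
  have ab: "cpc_prod C a b \<in> M" using cpc_prod_mor a b by simp
  then show "cpc_prod C a b \<in> M" .
  show "dm (cpc_prod C a b) = dm (cpc_prod C a (dm b))"
    "cd (cpc_prod C a b) = cd (cpc_prod C (cd a) b)"
    using cpc_prod_parts(12)[OF a b] cpc_prod_parts(12)[OF a dom_mor[OF b]]
      cpc_prod_parts(13)[OF a b] cpc_prod_parts(13)[OF cod_mor[OF a] b] dom_dom cod_cod a b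
    by simp_all
  show "dm (cpc_prod C a b) = cpc_prod C (cpc_prod C (dm a) (dm (cpc_prod C a b))) (dm a)"
    using cpc_prod_sandwich_Ob[OF dom_Ob[OF a] dom_Ob[OF ab] dom_cpc_prod_le[OF a b]] by simp
  show "cd (cpc_prod C a b) = cpc_prod C (cpc_prod C (cd b) (cd (cpc_prod C a b))) (cd b)"
    using cpc_prod_sandwich_Ob[OF cod_Ob[OF b] cod_Ob[OF ab] cod_cpc_prod_le[OF a b]] by simp
next
  fix a b c assume "a\<in>M" "b\<in>M" "c\<in>M"
  then show "cpc_prod C (cpc_prod C a b) c = cpc_prod C a (cpc_prod C b c)" by (rule cpc_prod_assoc)
qed

lemma is_drc_cpc2drc: "is_drc (cpc2drc C)"
  using drc_semigroup.normal_drc_restrict[OF drc_semigroup_cpc_prod] dom_undefined cod_undefined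
  by (simp add: is_drc_iff_normal_drc)

end

lemma chained_proj_cat_if_is_cpc: "is_cpc C \<Longrightarrow> chained_proj_cat C"
  unfolding is_cpc_def chained_proj_cat_def chained_proj_cat_axioms_def eval_proj_cat_def by simp

section \<open>The chained projection category of a DRC-semigroup\<close>

definition drc2cpc :: "'a drc \<Rightarrow> 'a cpc" where
  "drc2cpc S = (let A = drc_carrier S; m = drc_mult S; D = drc_D S; R = drc_R S; P = D ` A;
     th = (\<lambda>p q. if p \<in> P \<and> q \<in> P then R (m q p) else undefined);
     de = (\<lambda>p q. if p \<in> P \<and> q \<in> P then D (m p q) else undefined) in
    \<lparr>cpc_mor = A, cpc_dom = D, cpc_cod = R,
     cpc_comp = (\<lambda>a b. if a \<in> A \<and> b \<in> A \<and> R a = D b then m a b else undefined),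
     cpc_lel = (\<lambda>a b. a \<in> A \<and> b \<in> A \<and> a = m (D a) b \<and> D a = R (m (D a) (D b))),
     cpc_ler = (\<lambda>a b. a \<in> A \<and> b \<in> A \<and> a = m b (R a) \<and> R a = R (m (R a) (R b))),
     cpc_theta = th, cpc_delta = de,
     cpc_eps = (\<lambda>xs. if is_path P th de xs then list_mult m xs else undefined)\<rparr>)"

context normal_drc begin

definition "CPC = drc2cpc \<lparr>drc_carrier = A, drc_mult = m, drc_D = D, drc_R = R\<rparr>"
definition "thP = (\<lambda>p q. if p \<in> Proj \<and> q \<in> Proj then R (m q p) else undefined)"
definition "deP = (\<lambda>p q. if p \<in> Proj \<and> q \<in> Proj then D (m p q) else undefined)"

lemma CPC_mor[simp]: "cpc_mor CPC = A" unfolding CPC_def drc2cpc_def Let_def by simp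
lemma CPC_dom[simp]: "cpc_dom CPC = D" unfolding CPC_def drc2cpc_def Let_def by simp
lemma CPC_cod[simp]: "cpc_cod CPC = R" unfolding CPC_def drc2cpc_def Let_def by simp
lemma CPC_comp: "cpc_comp CPC a b = (if a \<in> A \<and> b \<in> A \<and> R a = D b then m a b else undefined)"
  unfolding CPC_def drc2cpc_def Let_def by simp
lemma CPC_comp_defined[simp]: "a \<in> A \<Longrightarrow> b \<in> A \<Longrightarrow> R a = D b \<Longrightarrow> cpc_comp CPC a b = m a b"
  by (simp add: CPC_comp)
lemma CPC_lel: "cpc_lel CPC a b \<longleftrightarrow> a \<in> A \<and> b \<in> A \<and> a = m (D a) b \<and> le (D a) (D b)"
  unfolding CPC_def drc2cpc_def Let_def le_def by simp
lemma CPC_ler: "cpc_ler CPC a b \<longleftrightarrow> a \<in> A \<and> b \<in> A \<and> a = m b (R a) \<and> le (R a) (R b)"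
  unfolding CPC_def drc2cpc_def Let_def le_def by simp
lemma CPC_th[simp]: "cpc_theta CPC = thP"
  unfolding CPC_def drc2cpc_def Let_def thP_def Proj_eq_image_D
  by (simp cong: if_cong)
lemma CPC_de[simp]: "cpc_delta CPC = deP"
  unfolding CPC_def drc2cpc_def Let_def deP_def Proj_eq_image_D
  by (simp cong: if_cong)
lemma CPC_eps: "cpc_eps CPC xs = (if is_path Proj thP deP xs then list_mult m xs else undefined)"
  unfolding CPC_def drc2cpc_def Let_def thP_def deP_def Proj_eq_image_D by (simp cong: if_cong)
lemma CPC_obj[simp]: "cpc_obj CPC = Proj" unfolding cpc_obj_def using Proj_eq_image_D by simp

lemma thP_Proj[simp]: "p\<in>Proj \<Longrightarrow> q\<in>Proj \<Longrightarrow> thP p q = R (m q p)" by (simp add: thP_def)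
lemma deP_Proj[simp]: "p\<in>Proj \<Longrightarrow> q\<in>Proj \<Longrightarrow> deP p q = D (m p q)" by (simp add: deP_def)

lemma CPC_path_iff: "is_path Proj thP deP xs \<longleftrightarrow> drc_path xs"
  unfolding is_path_def proj_F_def
  by (auto elim!: successively_mono simp: subset_iff)

lemma CPC_small_category: "small_category CPC"
  unfolding small_category_def Let_def CPC_mor CPC_dom CPC_cod
proof (intro conjI ballI allI impI)
  fix a assume a: "a\<in>A"
  show "D a \<in> A" "R a \<in> A" using a D_closed R_closed by auto
  show "D (D a) = D a" "R (D a) = D a" "D (R a) = R a" "R (R a) = R a"
    using a D_idem R_D D_R R_idem by auto
  show "cpc_comp CPC (D a) a = a" "cpc_comp CPC a (R a) = a"
    using a D_closed R_closed R_D D_R D_mult mult_R by auto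
next
  fix a b assume a: "a\<in>A" and b: "b\<in>A" and ab: "R a = D b"
  show "cpc_comp CPC a b \<in> A" "D (cpc_comp CPC a b) = D a" "R (cpc_comp CPC a b) = R b"
    using a b ab mult_closed D_comp R_comp by auto
next
  fix a b e assume a: "a\<in>A" and b: "b\<in>A" and e: "e\<in>A" and h: "R a = D b \<and> R b = D e"
  show "cpc_comp CPC (cpc_comp CPC a b) e = cpc_comp CPC a (cpc_comp CPC b e)"
    using a b e h mult_closed D_comp R_comp assoc by auto
next
  fix a assume "a\<notin>A"
  then show "D a = undefined" "R a = undefined" using D_undefined R_undefined by auto
next
  fix a b assume "\<not> (a \<in> A \<and> b \<in> A \<and> R a = D b)"
  then show "cpc_comp CPC a b = undefined" unfolding CPC_comp by (rule if_not_P)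
qed

lemma CPC_lel_refl: "x\<in>A \<Longrightarrow> cpc_lel CPC x x" unfolding CPC_lel
  using D_mult Proj_le_refl D_Proj by auto
lemma CPC_lel_antisym: "cpc_lel CPC x y \<Longrightarrow> cpc_lel CPC y x \<Longrightarrow> x = y"
proof -
  assume "cpc_lel CPC x y" "cpc_lel CPC y x"
  then have h: "x \<in> A" "y \<in> A" "x = m (D x) y" "le (D x) (D y)" "y = m (D y) x" "le (D y) (D x)"
    unfolding CPC_lel by auto
  then have "D x = D y" using Proj_le_antisym D_Proj by blast
  then show "x = y" using h D_mult by metis
qed
lemma CPC_lel_trans: "cpc_lel CPC x y \<Longrightarrow> cpc_lel CPC y z \<Longrightarrow> cpc_lel CPC x z"
proof -
  assume "cpc_lel CPC x y" "cpc_lel CPC y z"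
  then have h: "x \<in> A" "y \<in> A" "z\<in>A" "x = m (D x) y" "le (D x) (D y)" "y = m (D y) z" "le (D y) (D z)"
    unfolding CPC_lel by auto
  have l: "le (D x) (D z)" using h Proj_le_trans D_Proj by blast
  have "m (D x) (D y) = D x" using h le_iff_mult D_Proj by blast
  then have "m (D x) z = x" using h assoc D_closed by metis
  then show "cpc_lel CPC x z" unfolding CPC_lel using h l by auto
qed
lemma CPC_lel_partial_order: "partial_order_on_mor A (cpc_lel CPC)"
  unfolding partial_order_on_mor_def
    using CPC_lel_refl CPC_lel_antisym CPC_lel_trans CPC_lel by blast

lemma CPC_ler_refl: "x\<in>A \<Longrightarrow> cpc_ler CPC x x" unfolding CPC_ler
  using mult_R Proj_le_refl R_Proj by auto
lemma CPC_ler_antisym: "cpc_ler CPC x y \<Longrightarrow> cpc_ler CPC y x \<Longrightarrow> x = y"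
proof -
  assume "cpc_ler CPC x y" "cpc_ler CPC y x"
  then have h: "x \<in> A" "y \<in> A" "x = m y (R x)" "le (R x) (R y)" "y = m x (R y)" "le (R y) (R x)"
    unfolding CPC_ler by auto
  then have "R x = R y" using Proj_le_antisym R_Proj by blast
  then show "x = y" using h mult_R by metis
qed
lemma CPC_ler_trans: "cpc_ler CPC x y \<Longrightarrow> cpc_ler CPC y z \<Longrightarrow> cpc_ler CPC x z"
proof -
  assume "cpc_ler CPC x y" "cpc_ler CPC y z"
  then have h: "x \<in> A" "y \<in> A" "z\<in>A" "x = m y (R x)" "le (R x) (R y)" "y = m z (R y)" "le (R y) (R z)"
    unfolding CPC_ler by auto
  have l: "le (R x) (R z)" using h Proj_le_trans R_Proj by blast
  have "m (R y) (R x) = R x" using h le_iff_mult R_Proj by blast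
  then have "m z (R x) = x" using h assoc R_closed by metis
  then show "cpc_ler CPC x z" unfolding CPC_ler using h l by auto
qed
lemma CPC_ler_partial_order: "partial_order_on_mor A (cpc_ler CPC)"
  unfolding partial_order_on_mor_def
    using CPC_ler_refl CPC_ler_antisym CPC_ler_trans CPC_ler by blast

lemma CPC_lel_D:
  assumes "cpc_lel CPC a b"
  shows "cpc_lel CPC (D a) (D b)"
proof -
  have h: "a\<in>A" "b\<in>A" "le (D a) (D b)" using assms CPC_lel by auto
  have "m (D a) (D b) = D a" using le_iff_mult D_Proj h by blast
  then show ?thesis unfolding CPC_lel using h D_closed D_idem by auto
qed
lemma CPC_lel_R:
  assumes "cpc_lel CPC a b"
  shows "cpc_lel CPC (R a) (R b)"
proof -
  have h: "a\<in>A" "b\<in>A" "a = m (D a) b" "le (D a) (D b)" using assms CPC_lel by auto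
  have "le (R (m (D a) b)) (R b)" using le_R_mult D_closed h by blast
  then have l: "le (R a) (R b)" using h by metis
  then have "m (R a) (R b) = R a" using le_iff_mult R_Proj h by blast
  then show ?thesis unfolding CPC_lel using h l R_closed D_R by auto
qed
lemma CPC_ler_D:
  assumes "cpc_ler CPC a b"
  shows "cpc_ler CPC (D a) (D b)"
proof -
  have h: "a\<in>A" "b\<in>A" "a = m b (R a)" "le (R a) (R b)" using assms CPC_ler by auto
  have "le (D (m b (R a))) (D b)" using le_D_mult R_closed h by blast
  then have l: "le (D a) (D b)" using h by metis
  then have "m (D b) (D a) = D a" using le_iff_mult D_Proj h by blast
  then show ?thesis unfolding CPC_ler using h l D_closed R_D by auto
qed
lemma CPC_ler_R:
  assumes "cpc_ler CPC a b"
  shows "cpc_ler CPC (R a) (R b)"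
proof -
  have h: "a\<in>A" "b\<in>A" "le (R a) (R b)" using assms CPC_ler by auto
  have "m (R b) (R a) = R a" using le_iff_mult R_Proj h by blast
  then show ?thesis unfolding CPC_ler using h R_closed R_idem by auto
qed

lemma CPC_lel_comp:
  assumes "cpc_lel CPC a b" "cpc_lel CPC e e'" "R a = D e" "R b = D e'"
  shows "cpc_lel CPC (cpc_comp CPC a e) (cpc_comp CPC b e')"
proof -
  have h: "a\<in>A" "b\<in>A" "a = m (D a) b" "le (D a) (D b)" "e\<in>A" "e'\<in>A" "e = m (D e) e'" "le (D e) (D e')"
    using assms CPC_lel by auto
  have c: "cpc_comp CPC a e = m a e" "cpc_comp CPC b e' = m b e'" using h assms by auto
  have "m a e = m a (m (R a) e')" using h(7) assms(3) by simp
  also have "\<dots> = m a e'" using assoc[OF h(1) R_closed[OF h(1)] h(6)] mult_R[OF h(1)] by simp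
  also have "\<dots> = m (D a) (m b e')" using assoc[OF D_closed[OF h(1)] h(2) h(6)] h(3) by simp
  finally have 1: "m a e = m (D a) (m b e')" .
  have 2: "D (m a e) = D a" "D (m b e') = D b" using D_comp h assms by auto
  have 3: "m a e \<in> A" "m b e' \<in> A" using mult_closed h by auto
  show ?thesis unfolding c CPC_lel using 1 2 3 h(4) by simp
qed
lemma CPC_ler_comp:
  assumes "cpc_ler CPC a b" "cpc_ler CPC e e'" "R a = D e" "R b = D e'"
  shows "cpc_ler CPC (cpc_comp CPC a e) (cpc_comp CPC b e')"
proof -
  have h: "a\<in>A" "b\<in>A" "a = m b (R a)" "le (R a) (R b)" "e\<in>A" "e'\<in>A" "e = m e' (R e)" "le (R e) (R e')"
    using assms CPC_ler by auto
  have c: "cpc_comp CPC a e = m a e" "cpc_comp CPC b e' = m b e'" using h assms by auto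
  have "m a e = m (m b (D e)) e" using h(3) assms(3) by simp
  also have "\<dots> = m b e" using assoc[OF h(2) D_closed[OF h(5)] h(5)] D_mult[OF h(5)] by simp
  also have "\<dots> = m (m b e') (R e)" using assoc[OF h(2) h(6) R_closed[OF h(5)]] h(7) by simp
  finally have 1: "m a e = m (m b e') (R e)" .
  have 2: "R (m a e) = R e" "R (m b e') = R e'" using R_comp h assms by auto
  have 3: "m a e \<in> A" "m b e' \<in> A" using mult_closed h by auto
  show ?thesis unfolding c CPC_ler using 1 2 3 h(8) by simp
qed

lemma CPC_lel_mult_Proj:
  assumes a: "a\<in>A" and p: "p\<in>Proj" and le: "le p (D a)"
  shows "cpc_lel CPC (m p a) a" "D (m p a) = p" "cpc_lel CPC u a \<Longrightarrow> D u = p \<Longrightarrow> u = m p a"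
proof -
  show D: "D (m p a) = p" using D_mult_le p a le by blast
  show "cpc_lel CPC (m p a) a" unfolding CPC_lel using D le a p Proj_carrier mult_closed by auto
  show "cpc_lel CPC u a \<Longrightarrow> D u = p \<Longrightarrow> u = m p a" unfolding CPC_lel by auto
qed
lemma CPC_ler_mult_Proj:
  assumes a: "a\<in>A" and q: "q\<in>Proj" and le: "le q (R a)"
  shows "cpc_ler CPC (m a q) a" "R (m a q) = q" "cpc_ler CPC v a \<Longrightarrow> R v = q \<Longrightarrow> v = m a q"
proof -
  show R: "R (m a q) = q" using R_mult_le q a le by blast
  show "cpc_ler CPC (m a q) a" unfolding CPC_ler using R le a q Proj_carrier mult_closed by auto
  show "cpc_ler CPC v a \<Longrightarrow> R v = q \<Longrightarrow> v = m a q" unfolding CPC_ler by auto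
qed

lemma CPC_lel_Proj_iff:
  assumes p: "p\<in>Proj" and q: "q\<in>Proj"
  shows "cpc_lel CPC p q \<longleftrightarrow> le p q"
proof
  assume "cpc_lel CPC p q" then show "le p q" unfolding CPC_lel Proj_D[OF p] Proj_D[OF q] by simp
next
  assume l: "le p q"
  then have "m p q = p" using le_iff_mult[OF p q] by simp
  then show "cpc_lel CPC p q" unfolding CPC_lel Proj_D[OF p] Proj_D[OF q]
    using l Proj_carrier p q by simp
qed
lemma CPC_ler_Proj_iff:
  assumes p: "p\<in>Proj" and q: "q\<in>Proj"
  shows "cpc_ler CPC p q \<longleftrightarrow> le p q"
proof
  assume "cpc_ler CPC p q" then show "le p q" unfolding CPC_ler Proj_R[OF p] Proj_R[OF q] by simp
next
  assume l: "le p q"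
  then have "m q p = p" using le_iff_mult[OF p q] by simp
  then show "cpc_ler CPC p q" unfolding CPC_ler Proj_R[OF p] Proj_R[OF q]
    using l Proj_carrier p q by simp
qed
lemma proj_le_thP_iff: "p\<in>Proj \<Longrightarrow> q\<in>Proj \<Longrightarrow> proj_le thP p q \<longleftrightarrow> le p q"
  unfolding proj_le_def le_def by simp

lemma lres_CPC:
  assumes "a\<in>A" "p\<in>Proj" "le p (D a)"
  shows "lres CPC p a = m p a"
  unfolding lres_def CPC_dom
proof (rule the_equality)
  show "cpc_lel CPC (m p a) a \<and> D (m p a) = p" using CPC_lel_mult_Proj(1,2)[OF assms] by simp
  fix u assume "cpc_lel CPC u a \<and> D u = p" then show "u = m p a"
    using CPC_lel_mult_Proj(3)[OF assms] by blast
qed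
lemma rres_CPC:
  assumes "a\<in>A" "q\<in>Proj" "le q (R a)"
  shows "rres CPC a q = m a q"
  unfolding rres_def CPC_cod
proof (rule the_equality)
  show "cpc_ler CPC (m a q) a \<and> R (m a q) = q" using CPC_ler_mult_Proj(1,2)[OF assms] by simp
  fix u assume "cpc_ler CPC u a \<and> R u = q" then show "u = m a q"
    using CPC_ler_mult_Proj(3)[OF assms] by blast
qed

lemma CPC_lel_ordered: "ordered_category_common CPC (cpc_lel CPC)"
  unfolding ordered_category_common_def CPC_mor CPC_dom CPC_cod
  using CPC_lel_partial_order CPC_lel_D CPC_lel_R CPC_lel_comp by blast
lemma CPC_ler_ordered: "ordered_category_common CPC (cpc_ler CPC)"
  unfolding ordered_category_common_def CPC_mor CPC_dom CPC_cod
  using CPC_ler_partial_order CPC_ler_D CPC_ler_R CPC_ler_comp by blast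

lemma CPC_left_ordered: "left_ordered CPC"
  unfolding left_ordered_def CPC_obj CPC_mor CPC_dom
proof (intro conjI CPC_lel_ordered ballI impI)
  fix a p assume a: "a\<in>A" and p: "p\<in>Proj" and l: "cpc_lel CPC p (D a)"
  have le: "le p (D a)" using CPC_lel_Proj_iff p D_Proj a l by blast
  show "\<exists>!u. cpc_lel CPC u a \<and> D u = p" using CPC_lel_mult_Proj[OF a p le] by blast
qed
lemma CPC_right_ordered: "right_ordered CPC"
  unfolding right_ordered_def CPC_obj CPC_mor CPC_cod
proof (intro conjI CPC_ler_ordered ballI impI)
  fix a q assume a: "a\<in>A" and q: "q\<in>Proj" and l: "cpc_ler CPC q (R a)"
  have le: "le q (R a)" using CPC_ler_Proj_iff q R_Proj a l by blast
  show "\<exists>!v. cpc_ler CPC v a \<and> R v = q" using CPC_ler_mult_Proj[OF a q le] by blast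
qed
lemma CPC_biordered: "biordered CPC"
  unfolding biordered_def
    using CPC_small_category CPC_left_ordered CPC_right_ordered CPC_lel_Proj_iff CPC_ler_Proj_iff
    by simp

lemma CPC_projection_algebra: "projection_algebra Proj thP deP"
  using projection_algebra_cong[OF projection_algebra_Proj] by (simp add: thP_def deP_def)

lemma CPC_weak: "weak_projection_category CPC"
  unfolding weak_projection_category_def CPC_obj CPC_th CPC_de
  using CPC_biordered CPC_projection_algebra CPC_lel_Proj_iff CPC_ler_Proj_iff proj_le_thP_iff
  by (auto simp: thP_def deP_def)

lemma Theta_CPC:
  assumes a: "a\<in>A" and x: "x\<in>Proj"
  shows "Theta CPC a x = R (m x a)"
proof -
  have Da: "D a \<in> Proj" using D_Proj a .
  have t: "thP (D a) x = R (m x (D a))" using Da x by simp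
  have le: "le (R (m x (D a))) (D a)"
    using le_R_mult[OF Proj_carrier[OF x] D_closed[OF a]] R_D a by simp
  have tP: "R (m x (D a)) \<in> Proj" using R_Proj mult_closed Proj_carrier x D_closed a by blast
  have "Theta CPC a x = R (m (R (m x (D a))) a)" unfolding Theta_def CPC_cod CPC_dom CPC_th t
    using lres_CPC[OF a tP le] by simp
  also have "\<dots> = R (m (m x (D a)) a)"
    using R_R_mult[OF mult_closed[OF Proj_carrier[OF x] D_closed[OF a]] a] by simp
  also have "\<dots> = R (m x a)" using assoc[OF Proj_carrier[OF x] D_closed[OF a] a] D_mult[OF a] by simp
  finally show ?thesis .
qed
lemma Delta_CPC:
  assumes a: "a\<in>A" and x: "x\<in>Proj"
  shows "Delta CPC a x = D (m a x)"
proof -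
  have Ra: "R a \<in> Proj" using R_Proj a .
  have t: "deP (R a) x = D (m (R a) x)" using Ra x by simp
  have le: "le (D (m (R a) x)) (R a)"
    using le_D_mult[OF R_closed[OF a] Proj_carrier[OF x]] D_R a by simp
  have tP: "D (m (R a) x) \<in> Proj" using D_Proj mult_closed Proj_carrier x R_closed a by blast
  have "Delta CPC a x = D (m a (D (m (R a) x)))" unfolding Delta_def CPC_cod CPC_dom CPC_de t
    using rres_CPC[OF a tP le] by simp
  also have "\<dots> = D (m a (m (R a) x))"
    using D_mult_D[OF a mult_closed[OF R_closed[OF a] Proj_carrier[OF x]]] by simp
  also have "\<dots> = D (m a x)" using assoc[OF a R_closed[OF a] Proj_carrier[OF x]] mult_R[OF a] by simp
  finally show ?thesis .
qed

lemma CPC_C1: "condition_C1 CPC"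
  unfolding condition_C1_def CPC_obj CPC_mor CPC_th CPC_de CPC_cod CPC_dom
proof (intro ballI conjI impI)
  fix a q x assume a: "a\<in>A" and q: "q\<in>Proj" and l: "proj_le thP q (R a)" and x: "x\<in>Proj"
  have le: "le q (R a)" using proj_le_thP_iff q R_Proj a l by blast
  have mq: "m a q \<in> A" using mult_closed a Proj_carrier q by blast
  have "Theta CPC (rres CPC a q) x = R (m x (m a q))"
    using rres_CPC[OF a q le] Theta_CPC[OF mq x] by simp
  also have "\<dots> = R (m (m x a) q)" using assoc[OF Proj_carrier[OF x] a Proj_carrier[OF q]] by simp
  also have "\<dots> = R (m (R (m x a)) q)"
    using R_R_mult[OF mult_closed[OF Proj_carrier[OF x] a] Proj_carrier[OF q]] by simp
  also have "\<dots> = thP q (Theta CPC a x)"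
    using Theta_CPC[OF a x] q R_Proj mult_closed Proj_carrier x a by simp
  finally show "Theta CPC (rres CPC a q) x = thP q (Theta CPC a x)" .
next
  fix a p x assume a: "a\<in>A" and p: "p\<in>Proj" and l: "proj_le thP p (D a)" and x: "x\<in>Proj"
  have le: "le p (D a)" using proj_le_thP_iff p D_Proj a l by blast
  have mp: "m p a \<in> A" using mult_closed a Proj_carrier p by blast
  have "Delta CPC (lres CPC p a) x = D (m (m p a) x)"
    using lres_CPC[OF a p le] Delta_CPC[OF mp x] by simp
  also have "\<dots> = D (m p (m a x))" using assoc[OF Proj_carrier[OF p] a Proj_carrier[OF x]] by simp
  also have "\<dots> = D (m p (D (m a x)))"
    using D_mult_D[OF Proj_carrier[OF p] mult_closed[OF a Proj_carrier[OF x]]] by simp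
  also have "\<dots> = deP p (Delta CPC a x)"
    using Delta_CPC[OF a x] p D_Proj mult_closed Proj_carrier x a by simp
  finally show "Delta CPC (lres CPC p a) x = deP p (Delta CPC a x)" .
qed

lemma lpath_cong: "\<forall>p\<in>Proj. \<forall>q\<in>Proj. f p q = g p q \<and> g p q \<in> Proj \<Longrightarrow> q\<in>Proj \<Longrightarrow> set xs \<subseteq> Proj \<Longrightarrow>
   lpath f q xs = lpath g q xs"
  by (induction xs arbitrary: q) auto

lemma lpath_thP: "q\<in>Proj \<Longrightarrow> set xs \<subseteq> Proj \<Longrightarrow> lpath thP q xs = lpath drc_th q xs"
  by (rule lpath_cong) (auto intro: R_Proj mult_closed Proj_carrier)
lemma rpath_deP: "q\<in>Proj \<Longrightarrow> set xs \<subseteq> Proj \<Longrightarrow> rpath deP q xs = rpath drc_de q xs"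
  unfolding rpath_def
    by (subst lpath_cong[where g = drc_de]) (auto intro: D_Proj mult_closed Proj_carrier)

lemma CPC_eps_path: "drc_path xs \<Longrightarrow> cpc_eps CPC xs = list_mult m xs"
  by (simp add: CPC_eps CPC_path_iff)

lemma CPC_evaluation_map: "evaluation_map CPC"
  unfolding evaluation_map_def Let_def CPC_obj CPC_th CPC_de CPC_mor CPC_dom CPC_cod CPC_path_iff
proof (intro conjI allI impI ballI)
  fix xs assume p: "drc_path xs"
  show "cpc_eps CPC xs \<in> A" "D (cpc_eps CPC xs) = hd xs" "R (cpc_eps CPC xs) = last xs"
    using CPC_eps_path[OF p] list_mult_path[OF p] by auto
next
  fix xs ys assume h: "drc_path xs \<and> drc_path ys \<and> remdups_adj xs = remdups_adj ys"
  then have s: "set xs \<subseteq> Proj" "set ys \<subseteq> Proj" by (auto simp: is_path_def)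
  have "list_mult m xs = list_mult m ys"
    using list_mult_remdups_adj[OF s(1)] list_mult_remdups_adj[OF s(2)] h by metis
  then show "cpc_eps CPC xs = cpc_eps CPC ys" using CPC_eps_path h by simp
next
  fix xs ys assume h: "drc_path xs \<and> drc_path ys \<and> last xs = hd ys"
  have px: "drc_path xs" and py: "drc_path ys" and l: "last xs = hd ys" using h by auto
  have pa: "drc_path (xs @ tl ys)" using drc_path_append px py l .
  have "cpc_comp CPC (list_mult m xs) (list_mult m ys) = m (list_mult m xs) (list_mult m ys)"
    using list_mult_path[OF px] list_mult_path[OF py] l by simp
  moreover note list_mult_path_append[OF px py l]
  ultimately show "cpc_eps CPC (xs @ tl ys) = cpc_comp CPC (cpc_eps CPC xs) (cpc_eps CPC ys)"
    using CPC_eps_path[OF pa] CPC_eps_path[OF px] CPC_eps_path[OF py] by simp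
next
  fix p assume p: "p\<in>Proj"
  have "drc_path [p]" using p by (simp add: is_path_def)
  then show "cpc_eps CPC [p] = p" using CPC_eps_path by simp
next
  fix xs q assume p: "drc_path xs" and q: "q\<in>Proj" and l: "proj_le thP q (hd xs)"
  have hx: "hd xs \<in> Proj" "set xs \<subseteq> Proj" using p by (auto simp: is_path_def)
  have le: "le q (hd xs)" using proj_le_thP_iff[OF q hx(1)] l by simp
  note L = lpath_list_mult[OF p q le]
  have lp: "lpath thP q xs = lpath drc_th q xs" using lpath_thP q hx by simp
  have E: "cpc_eps CPC (lpath thP q xs) = m q (list_mult m xs)" using lp L CPC_eps_path by simp
  have X: "list_mult m xs \<in> A" "D (list_mult m xs) = hd xs" using list_mult_path[OF p] by auto
  show "cpc_lel CPC (cpc_eps CPC (lpath thP q xs)) (cpc_eps CPC xs)"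
    using CPC_lel_mult_Proj(1)[OF X(1) q] X(2) le E CPC_eps_path[OF p] by simp
next
  fix xs q assume p: "drc_path xs" and q: "q\<in>Proj" and l: "proj_le thP q (last xs)"
  have hx: "last xs \<in> Proj" "set xs \<subseteq> Proj" using p by (auto simp: is_path_def)
  have le: "le q (last xs)" using proj_le_thP_iff[OF q hx(1)] l by simp
  note L = rpath_list_mult[OF p q le]
  have lp: "rpath deP q xs = rpath drc_de q xs" using rpath_deP q hx by simp
  have E: "cpc_eps CPC (rpath deP q xs) = m (list_mult m xs) q" using lp L CPC_eps_path by simp
  have X: "list_mult m xs \<in> A" "R (list_mult m xs) = last xs" using list_mult_path[OF p] by auto
  show "cpc_ler CPC (cpc_eps CPC (rpath deP q xs)) (cpc_eps CPC xs)"
    using CPC_ler_mult_Proj(1)[OF X(1) q] X(2) le E CPC_eps_path[OF p] by simp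
next
  fix xs assume "\<not> drc_path xs"
  then show "cpc_eps CPC xs = undefined" by (simp add: CPC_eps CPC_path_iff)
qed

lemma CPC_eval_proj_cat: "eval_proj_cat CPC"
  unfolding eval_proj_cat_def projection_category_def
    using CPC_weak CPC_C1 CPC_evaluation_map by simp

lemma CPC_prod:
  assumes a: "a\<in>A" and b: "b\<in>A"
  shows "cpc_prod CPC a b = m a b"
proof -
  interpret P: eval_proj_cat CPC by (rule CPC_eval_proj_cat)
  define e where "e = D (m (R a) (D b))"
  define f where "f = R (m (R a) (D b))"
  have Ra: "R a \<in> Proj" and Db: "D b \<in> Proj" using R_Proj D_Proj a b by auto
  have e1: "deP (R a) (D b) = e" "thP (D b) (R a) = f" unfolding e_def f_def using Ra Db by auto
  have eP: "e \<in> Proj" "f \<in> Proj" unfolding e_def f_def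
    using R_Proj D_Proj mult_closed R_closed D_closed a b by auto
  have le1: "le e (R a)" unfolding e_def
    using le_D_mult[OF R_closed[OF a] D_closed[OF b]] D_R a by simp
  have le2: "le f (D b)" unfolding f_def
    using le_R_mult[OF R_closed[OF a] D_closed[OF b]] R_D b by simp
  have pe: "drc_path [e, f]" using P.cpc_prod_parts(5)[of a b] a b e1 CPC_path_iff by simp
  have c: "cpc_prod CPC a b = cpc_comp CPC (cpc_comp CPC (rres CPC a e) (cpc_eps CPC [e,f])) (lres CPC f b)"
    unfolding cpc_prod_def Let_def CPC_dom CPC_cod CPC_th CPC_de e1 ..
  have r: "rres CPC a e = m a e" using rres_CPC[OF a eP(1) le1] .
  have l: "lres CPC f b = m f b" using lres_CPC[OF b eP(2) le2] .
  have E: "cpc_eps CPC [e,f] = m e f" using CPC_eps_path[OF pe] by simp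
  have eA: "e\<in>A" "f\<in>A" using eP Proj_carrier by auto
  have R1: "R (m a e) = e" using R_mult_le eP a le1 by blast
  have D1: "D (m e f) = e" "R (m e f) = f" using list_mult_path[OF pe] by auto
  have D2: "D (m f b) = f" using D_mult_le eP b le2 by blast
  have c1: "cpc_comp CPC (m a e) (m e f) = m (m a e) (m e f)" using R1 D1 mult_closed a eA by simp
  have c2: "cpc_comp CPC (m (m a e) (m e f)) (m f b) = m (m (m a e) (m e f)) (m f b)"
    using D1 D2 mult_closed a b eA R_comp R1 by simp
  have ef: "m e f = m (R a) (D b)" unfolding e_def f_def using Proj_mult_split[OF Ra Db] by simp
  have ee: "m e e = e" "m f f = f" using Proj_idem eP by auto
  have "m (m (m a e) (m e f)) (m f b) = m (m a (m e f)) (m f b)"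
    using assoc[OF a eA(1) mult_closed[OF eA]] assoc[OF eA(1) eA(1) eA(2)] ee by simp
  also have "\<dots> = m a (m (m e f) b)"
    using assoc[OF a mult_closed[OF eA] mult_closed[OF eA(2) b]] assoc[OF mult_closed[OF eA] eA(2) b] assoc[OF eA(1) eA(2) eA(2)] ee
    by simp
  also have "\<dots> = m a (m (m (R a) (D b)) b)" using ef by simp
  also have "\<dots> = m a (m (R a) (m (D b) b))" using assoc[OF R_closed[OF a] D_closed[OF b] b] by simp
  also have "\<dots> = m (m a (R a)) b" using D_mult[OF b] assoc[OF a R_closed[OF a] b] by simp
  also have "\<dots> = m a b" using mult_R[OF a] by simp
  finally show ?thesis using c r l E c1 c2 by simp
qed

lemma CPC_is_cpc: "is_cpc CPC"
proof -
  interpret P: eval_proj_cat CPC by (rule CPC_eval_proj_cat)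
  have "\<forall>b\<in>A. \<forall>p\<in>Proj. \<forall>s\<in>Proj. lambda_map CPC p b s = rho_map CPC p b s"
  proof (intro ballI)
    fix b p s assume b: "b\<in>A" and p: "p\<in>Proj" and s: "s\<in>Proj"
    have pA: "p\<in>A" "s\<in>A" using p s Proj_carrier by auto
    have "lambda_map CPC p b s = m (m p b) s"
      using P.lambda_map_eq[of p b s] p b s CPC_prod mult_closed pA by simp
    also have "\<dots> = m p (m b s)" using assoc pA b by simp
    also have "\<dots> = rho_map CPC p b s"
      using P.rho_map_eq[of p b s] p b s CPC_prod mult_closed pA by simp
    finally show "lambda_map CPC p b s = rho_map CPC p b s" .
  qed
  then show ?thesis unfolding is_cpc_def
    using CPC_weak CPC_C1 CPC_evaluation_map by (simp add: projection_category_def)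
qed

end

section \<open>The isomorphism of categories\<close>

lemma CPC_eq_drc2cpc:
  "is_drc S \<Longrightarrow> normal_drc.CPC (drc_carrier S) (drc_mult S) (drc_D S) (drc_R S) = drc2cpc S"
  by (cases S) (simp add: normal_drc.CPC_def is_drc_iff_normal_drc)

lemma drc2cpc_is_cpc: "is_drc S \<Longrightarrow> is_cpc (drc2cpc S)"
  using normal_drc.CPC_is_cpc CPC_eq_drc2cpc is_drc_iff_normal_drc by metis

lemma cpc2drc_is_drc: "is_cpc C \<Longrightarrow> is_drc (cpc2drc C)"
  using chained_proj_cat.is_drc_cpc2drc chained_proj_cat_if_is_cpc by blast

lemma cpc2drc_drc2cpc:
  assumes S: "is_drc S"
  shows "cpc2drc (drc2cpc S) = S"
proof -
  interpret S: normal_drc "drc_carrier S" "drc_mult S" "drc_D S" "drc_R S"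
    using S by (simp add: is_drc_iff_normal_drc)
  have "(\<lambda>a b. if a \<in> drc_carrier S \<and> b \<in> drc_carrier S then cpc_prod S.CPC a b else undefined)
      = drc_mult S"
    using S.CPC_prod S.mult_undefined by (auto simp: fun_eq_iff)
  then show ?thesis
    unfolding cpc2drc_def CPC_eq_drc2cpc[OF S, symmetric] S.CPC_mor S.CPC_dom S.CPC_cod
    by (cases S) simp
qed

context chained_proj_cat
begin

sublocale drc: normal_drc M "\<lambda>a b. if a \<in> M \<and> b \<in> M then cpc_prod C a b else undefined" dm cd
  using is_drc_cpc2drc by (simp add: is_drc_iff_normal_drc)

lemma drc_Proj: "drc.Proj = Ob"
  using drc.Proj_eq_image_D Ob_eq by simp

lemma drc_le_iff: "p\<in>Ob \<Longrightarrow> q\<in>Ob \<Longrightarrow> drc.le p q \<longleftrightarrow> \<theta> q p = p"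
  unfolding drc.le_def using cpc_prod_Ob Ob_mor by auto

lemma drc_CPC_comp: "cpc_comp drc.CPC = cp"
  using drc.CPC_comp cpc_prod_comp comp_undefined by (auto simp: fun_eq_iff)

lemma drc_CPC_lel: "cpc_lel drc.CPC = lel"
proof (intro ext iffI)
  fix a b assume "cpc_lel drc.CPC a b"
  then have h: "a \<in> M" "b \<in> M" "a = cpc_prod C (dm a) b" "\<theta> (dm b) (dm a) = dm a"
    unfolding drc.CPC_lel using dom_mor drc_le_iff dom_Ob by auto
  then show "lel a b" using cpc_prod_lres lres_props(1) dom_Ob by metis
next
  fix a b assume h: "lel a b"
  then have ab: "a \<in> M" "b \<in> M" "\<theta> (dm b) (dm a) = dm a" using lel_mor lel_dom_le by auto
  then have "cpc_prod C (dm a) b = a" using cpc_prod_lres dom_Ob lres_uniq[OF h] by metis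
  then show "cpc_lel drc.CPC a b" unfolding drc.CPC_lel using ab drc_le_iff dom_Ob dom_mor by auto
qed

lemma drc_CPC_ler: "cpc_ler drc.CPC = ler"
proof (intro ext iffI)
  fix a b assume "cpc_ler drc.CPC a b"
  then have h: "a \<in> M" "b \<in> M" "a = cpc_prod C b (cd a)" "\<theta> (cd b) (cd a) = cd a"
    unfolding drc.CPC_ler using cod_mor drc_le_iff cod_Ob by auto
  then show "ler a b" using cpc_prod_rres rres_props(1) cod_Ob by metis
next
  fix a b assume h: "ler a b"
  then have ab: "a \<in> M" "b \<in> M" "\<theta> (cd b) (cd a) = cd a" using ler_mor ler_cod_le by auto
  then have "cpc_prod C b (cd a) = a" using cpc_prod_rres cod_Ob rres_uniq[OF h] by metis
  then show "cpc_ler drc.CPC a b" unfolding drc.CPC_ler using ab drc_le_iff cod_Ob cod_mor by auto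
qed

lemma drc_thP: "drc.thP = \<theta>"
  unfolding drc.thP_def drc_Proj
    using cpc_prod_Ob(3) Ob_mor theta_undefined by (auto simp: fun_eq_iff)

lemma drc_deP: "drc.deP = \<delta>"
  unfolding drc.deP_def drc_Proj
    using cpc_prod_Ob(2) Ob_mor delta_undefined by (auto simp: fun_eq_iff)

lemma drc_CPC_eps: "cpc_eps drc.CPC = \<epsilon>"
proof
  fix xs
  show "cpc_eps drc.CPC xs = \<epsilon> xs"
  proof (cases "path xs")
    case True
    have "set xs \<subseteq> M" using True Ob_mor by (auto simp: is_path_def)
    then have "list_mult (\<lambda>a b. if a \<in> M \<and> b \<in> M then cpc_prod C a b else undefined) xs =
        list_mult (cpc_prod C) xs"
      by (rule list_mult_cong) (simp_all add: cpc_prod_mor)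
    then show ?thesis unfolding drc.CPC_eps drc_Proj drc_thP drc_deP
      using True list_mult_eps by simp
  qed (simp add: drc.CPC_eps drc_Proj drc_thP drc_deP eps_undefined)
qed

end

lemma drc2cpc_cpc2drc:
  assumes C: "is_cpc C"
  shows "drc2cpc (cpc2drc C) = C"
proof -
  interpret chained_proj_cat C using chained_proj_cat_if_is_cpc[OF C] .
  have "drc2cpc (cpc2drc C) = drc.CPC"
    using CPC_eq_drc2cpc[OF cpc2drc_is_drc[OF C]] by simp
  then show ?thesis
    using drc.CPC_th drc.CPC_de drc_thP drc_deP
    by (intro cpc.equality) (simp_all add: drc_CPC_comp drc_CPC_lel drc_CPC_ler drc_CPC_eps)
qed

locale drc_morphism =
  fixes S T :: "'a drc" and f :: "'a \<Rightarrow> 'a"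
  assumes is_drc_S: "is_drc S" and is_drc_T: "is_drc T" and hom: "f \<in> drc_hom S T"
begin

sublocale s: normal_drc "drc_carrier S" "drc_mult S" "drc_D S" "drc_R S"
  using is_drc_S by (simp add: is_drc_iff_normal_drc)
sublocale t: normal_drc "drc_carrier T" "drc_mult T" "drc_D T" "drc_R T"
  using is_drc_T by (simp add: is_drc_iff_normal_drc)

lemma f_funcset: "f \<in> drc_carrier S \<rightarrow>\<^sub>E drc_carrier T"
  using hom by (simp add: drc_hom_def)
lemma f_carrier: "a \<in> drc_carrier S \<Longrightarrow> f a \<in> drc_carrier T"
  using f_funcset by auto
lemma f_mult:
  "a \<in> drc_carrier S \<Longrightarrow> b \<in> drc_carrier S \<Longrightarrow> f (drc_mult S a b) = drc_mult T (f a) (f b)"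
  using hom by (simp add: drc_hom_def)
lemma f_D: "a \<in> drc_carrier S \<Longrightarrow> f (drc_D S a) = drc_D T (f a)"
  using hom by (simp add: drc_hom_def)
lemma f_R: "a \<in> drc_carrier S \<Longrightarrow> f (drc_R S a) = drc_R T (f a)"
  using hom by (simp add: drc_hom_def)

lemma f_Proj: "p \<in> s.Proj \<Longrightarrow> f p \<in> t.Proj"
  using f_D[of p] f_carrier[of p] s.Proj_carrier[of p] s.Proj_D[of p] unfolding t.Proj_def by simp

lemma f_le:
  assumes p: "p \<in> s.Proj" and q: "q \<in> s.Proj" and le: "s.le p q"
  shows "t.le (f p) (f q)"
proof -
  have pq: "p \<in> drc_carrier S" "q \<in> drc_carrier S"
    using p q s.Proj_carrier by auto
  have "f p = f (drc_R S (drc_mult S p q))" using le unfolding s.le_def by (rule arg_cong[of _ _ f])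
  also have "\<dots> = drc_R T (drc_mult T (f p) (f q))" using f_R f_mult s.mult_closed pq by simp
  finally show ?thesis unfolding t.le_def .
qed

lemma f_proj_F:
  assumes "x \<in> s.Proj" "y \<in> s.Proj" "proj_F s.drc_th s.drc_de x y"
  shows "proj_F t.drc_th t.drc_de (f x) (f y)"
proof -
  have xy: "x \<in> drc_carrier S" "y \<in> drc_carrier S" "drc_mult S x y \<in> drc_carrier S"
    using assms s.Proj_carrier s.mult_closed by auto
  have F: "x = drc_D S (drc_mult S x y)" "y = drc_R S (drc_mult S x y)"
    using assms(3) unfolding proj_F_def by blast+
  have "f x = drc_D T (drc_mult T (f x) (f y))"
  proof -
    have "f x = f (drc_D S (drc_mult S x y))" using F(1) by (rule arg_cong[of _ _ f])
    also have "\<dots> = drc_D T (drc_mult T (f x) (f y))" using f_D f_mult xy by simp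
    finally show ?thesis .
  qed
  moreover have "f y = drc_R T (drc_mult T (f x) (f y))"
  proof -
    have "f y = f (drc_R S (drc_mult S x y))" using F(2) by (rule arg_cong[of _ _ f])
    also have "\<dots> = drc_R T (drc_mult T (f x) (f y))" using f_R f_mult xy by simp
    finally show ?thesis .
  qed
  ultimately show ?thesis unfolding proj_F_def by blast
qed

lemma f_drc_path: "s.drc_path xs \<Longrightarrow> t.drc_path (map f xs)"
  unfolding is_path_def using f_Proj f_proj_F
  by (auto simp: successively_map elim!: successively_mono)

lemma f_list_mult:
  "xs \<noteq> [] \<Longrightarrow> set xs \<subseteq> drc_carrier S \<Longrightarrow>
    list_mult (drc_mult T) (map f xs) = f (list_mult (drc_mult S) xs)"
  using list_mult_map[of "drc_carrier S" f "drc_mult S" "drc_mult T"] f_mult s.mult_closed by blast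

lemma f_lel:
  assumes "cpc_lel s.CPC a b"
  shows "cpc_lel t.CPC (f a) (f b)"
proof -
  have h: "a \<in> drc_carrier S" "b \<in> drc_carrier S" "a = drc_mult S (drc_D S a) b"
    "s.le (drc_D S a) (drc_D S b)"
    using assms unfolding s.CPC_lel by auto
  have "f a = f (drc_mult S (drc_D S a) b)" using h(3) by (rule arg_cong[of _ _ f])
  also have "\<dots> = drc_mult T (drc_D T (f a)) (f b)" using f_mult f_D s.D_closed h(1,2) by simp
  finally have "f a = drc_mult T (drc_D T (f a)) (f b)" .
  then show ?thesis
    unfolding t.CPC_lel using f_le[OF s.D_Proj s.D_Proj h(4)] f_D f_carrier h by simp
qed

lemma f_ler:
  assumes "cpc_ler s.CPC a b"
  shows "cpc_ler t.CPC (f a) (f b)"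
proof -
  have h: "a \<in> drc_carrier S" "b \<in> drc_carrier S" "a = drc_mult S b (drc_R S a)"
    "s.le (drc_R S a) (drc_R S b)"
    using assms unfolding s.CPC_ler by auto
  have "f a = f (drc_mult S b (drc_R S a))" using h(3) by (rule arg_cong[of _ _ f])
  also have "\<dots> = drc_mult T (f b) (drc_R T (f a))" using f_mult f_R s.R_closed h(1,2) by simp
  finally have "f a = drc_mult T (f b) (drc_R T (f a))" .
  then show ?thesis
    unfolding t.CPC_ler using f_le[OF s.R_Proj s.R_Proj h(4)] f_R f_carrier h by simp
qed

lemma cpc_hom_CPC: "f \<in> cpc_hom s.CPC t.CPC"
  unfolding cpc_hom_def
proof (intro CollectI conjI ballI allI impI)
  fix x y assume xy: "x \<in> cpc_mor s.CPC" "y \<in> cpc_mor s.CPC" "cpc_cod s.CPC x = cpc_dom s.CPC y"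
  then have "drc_R T (f x) = drc_D T (f y)" using f_R[of x] f_D[of y] by simp
  then show "f (cpc_comp s.CPC x y) = cpc_comp t.CPC (f x) (f y)"
    using xy f_carrier f_mult by (simp add: s.CPC_comp t.CPC_comp)
next
  fix xs assume "is_path (cpc_obj s.CPC) (cpc_theta s.CPC) (cpc_delta s.CPC) xs"
  then have p: "s.drc_path xs" using s.CPC_path_iff by simp
  then show "cpc_eps t.CPC (map f xs) = f (cpc_eps s.CPC xs)"
    using t.CPC_eps_path[OF f_drc_path[OF p]] s.CPC_eps_path[OF p] f_list_mult s.Proj_carrier
    by (auto simp: is_path_def)
next
  fix p q assume "p \<in> cpc_obj s.CPC" "q \<in> cpc_obj s.CPC"
  then show "f (cpc_theta s.CPC p q) = cpc_theta t.CPC (f p) (f q)"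
    "f (cpc_delta s.CPC p q) = cpc_delta t.CPC (f p) (f q)"
    using f_R f_D f_mult f_Proj s.Proj_carrier s.mult_closed by simp_all
next
  show "f \<in> cpc_mor s.CPC \<rightarrow>\<^sub>E cpc_mor t.CPC" using f_funcset by simp
next
  fix a assume "a \<in> cpc_mor s.CPC"
  then show "f (cpc_dom s.CPC a) = cpc_dom t.CPC (f a)" "f (cpc_cod s.CPC a) = cpc_cod t.CPC (f a)"
    using f_D f_R by simp_all
next
  fix a b
  show "cpc_lel s.CPC a b \<Longrightarrow> cpc_lel t.CPC (f a) (f b)" by (rule f_lel)
  show "cpc_ler s.CPC a b \<Longrightarrow> cpc_ler t.CPC (f a) (f b)" by (rule f_ler)
next
  show "f ` cpc_obj s.CPC \<subseteq> cpc_obj t.CPC" using f_Proj by auto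
qed

end

lemma drc2cpc_hom:
  assumes "is_drc S" "is_drc T" "f \<in> drc_hom S T"
  shows "f \<in> cpc_hom (drc2cpc S) (drc2cpc T)"
proof -
  interpret drc_morphism S T f using assms by unfold_locales
  show ?thesis using cpc_hom_CPC CPC_eq_drc2cpc[OF assms(1)] CPC_eq_drc2cpc[OF assms(2)] by simp
qed

context eval_proj_cat begin

lemma hom_lres:
  assumes h: "\<phi> \<in> cpc_hom C C'" and C': "eval_proj_cat C'"
  and a: "a\<in>M" and p: "p\<in>Ob" and le: "\<theta> (dm a) p = p"
  shows "\<phi> (lres C p a) = lres C' (\<phi> p) (\<phi> a)"
proof -
  interpret Q: eval_proj_cat C' by (rule C')
  have u: "lel (lres C p a) a" "dm (lres C p a) = p" "lres C p a \<in> M"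
    using lres_props[OF a p le] by auto
  have hu: "cpc_lel C' (\<phi> (lres C p a)) (\<phi> a)" using h u(1) unfolding cpc_hom_def by blast
  have "cpc_dom C' (\<phi> (lres C p a)) = \<phi> (dm (lres C p a))"
    using h u(3) unfolding cpc_hom_def by auto
  then have "cpc_dom C' (\<phi> (lres C p a)) = \<phi> p" using u(2) by simp
  then show ?thesis using Q.lres_uniq[OF hu] by simp
qed
lemma hom_rres:
  assumes h: "\<phi> \<in> cpc_hom C C'" and C': "eval_proj_cat C'"
  and a: "a\<in>M" and q: "q\<in>Ob" and le: "\<theta> (cd a) q = q"
  shows "\<phi> (rres C a q) = rres C' (\<phi> a) (\<phi> q)"
proof -
  interpret Q: eval_proj_cat C' by (rule C')
  have u: "ler (rres C a q) a" "cd (rres C a q) = q" "rres C a q \<in> M"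
    using rres_props[OF a q le] by auto
  have hu: "cpc_ler C' (\<phi> (rres C a q)) (\<phi> a)" using h u(1) unfolding cpc_hom_def by blast
  have "cpc_cod C' (\<phi> (rres C a q)) = \<phi> (cd (rres C a q))"
    using h u(3) unfolding cpc_hom_def by auto
  then have "cpc_cod C' (\<phi> (rres C a q)) = \<phi> q" using u(2) by simp
  then show ?thesis using Q.rres_uniq[OF hu] by simp
qed

lemma hom_cpc_prod:
  assumes h: "\<phi> \<in> cpc_hom C C'" and C': "eval_proj_cat C'" and a: "a\<in>M" and b: "b\<in>M"
  shows "\<phi> (cpc_prod C a b) = cpc_prod C' (\<phi> a) (\<phi> b)"
proof -
  interpret Q: eval_proj_cat C' by (rule C')
  have H: "\<phi> \<in> M \<rightarrow>\<^sub>E cpc_mor C'"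
    "\<And>a. a\<in>M \<Longrightarrow> \<phi> (dm a) = cpc_dom C' (\<phi> a) \<and> \<phi> (cd a) = cpc_cod C' (\<phi> a)"
    "\<And>a b. a\<in>M \<Longrightarrow> b\<in>M \<Longrightarrow> cd a = dm b \<Longrightarrow> \<phi> (cp a b) = cpc_comp C' (\<phi> a) (\<phi> b)"
    "\<And>p q. p\<in>Ob \<Longrightarrow> q\<in>Ob \<Longrightarrow>
      \<phi> (\<theta> p q) = cpc_theta C' (\<phi> p) (\<phi> q) \<and> \<phi> (\<delta> p q) = cpc_delta C' (\<phi> p) (\<phi> q)"
    "\<And>xs. path xs \<Longrightarrow> cpc_eps C' (map \<phi> xs) = \<phi> (\<epsilon> xs)"
    using h unfolding cpc_hom_def by auto
  note B = cpc_prod_parts[OF a b]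
  let ?e = "\<delta> (cd a) (dm b)" and ?f = "\<theta> (dm b) (cd a)"
  have 1: "\<phi> ?e = cpc_delta C' (cpc_cod C' (\<phi> a)) (cpc_dom C' (\<phi> b))"
    using H(4)[OF cod_Ob[OF a] dom_Ob[OF b]] H(2) a b by simp
  have 2: "\<phi> ?f = cpc_theta C' (cpc_dom C' (\<phi> b)) (cpc_cod C' (\<phi> a))"
    using H(4)[OF dom_Ob[OF b] cod_Ob[OF a]] H(2) a b by simp
  have r: "\<phi> (rres C a ?e) = rres C' (\<phi> a) (\<phi> ?e)" using hom_rres[OF h C' a B(1) B(3)] .
  have l: "\<phi> (lres C ?f b) = lres C' (\<phi> ?f) (\<phi> b)" using hom_lres[OF h C' b B(2) B(4)] .
  have E: "\<phi> (\<epsilon> [?e, ?f]) = cpc_eps C' [\<phi> ?e, \<phi> ?f]" using H(5)[OF B(5)] by simp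
  have c1: "\<phi> (cp (rres C a ?e) (\<epsilon> [?e, ?f])) = cpc_comp C' (\<phi> (rres C a ?e)) (\<phi> (\<epsilon> [?e, ?f]))"
    using H(3)[OF B(6) B(14)] B(7) B(15) by simp
  have c2: "\<phi> (cp (cp (rres C a ?e) (\<epsilon> [?e, ?f])) (lres C ?f b)) =
      cpc_comp C' (\<phi> (cp (rres C a ?e) (\<epsilon> [?e, ?f]))) (\<phi> (lres C ?f b))"
    using H(3)[OF comp_mor[OF B(6) B(14)] B(8)] cod_comp[OF B(6) B(14)] B(7,9,15,16) by simp
  show ?thesis unfolding B(10) c2 c1 r l E 1 2 cpc_prod_def Let_def ..
qed

end

lemma cpc2drc_hom:
  assumes C: "is_cpc C" and C': "is_cpc C'" and h: "\<phi> \<in> cpc_hom C C'"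
  shows "\<phi> \<in> drc_hom (cpc2drc C) (cpc2drc C')"
proof -
  interpret c: chained_proj_cat C using chained_proj_cat_if_is_cpc[OF C] .
  interpret c': chained_proj_cat C' using chained_proj_cat_if_is_cpc[OF C'] .
  have E: "\<phi> \<in> c.M \<rightarrow>\<^sub>E c'.M" using h by (simp add: cpc_hom_def)
  show ?thesis unfolding drc_hom_def cpc2drc_simps
  proof (intro CollectI conjI ballI)
    fix a b assume "a\<in>c.M" "b\<in>c.M"
    then show "\<phi> (if a \<in> c.M \<and> b \<in> c.M then cpc_prod C a b else undefined) =
        (if \<phi> a \<in> c'.M \<and> \<phi> b \<in> c'.M then cpc_prod C' (\<phi> a) (\<phi> b) else undefined)"
      using E c.hom_cpc_prod[OF h c'.eval_proj_cat_axioms] by auto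
  qed (use E h in \<open>auto simp: cpc_hom_def\<close>)
qed

lemma cpc_mor_drc2cpc: "cpc_mor (drc2cpc S) = drc_carrier S"
  by (simp add: drc2cpc_def Let_def)

lemma is_functor_drc2cpc:
  "is_functor (is_drc :: 'a drc \<Rightarrow> bool) drc_hom drc_id drc_comp is_cpc cpc_hom cpc_id cpc_fcomp
     drc2cpc (\<lambda>S T f. f)"
  unfolding is_functor_def drc_id_def cpc_id_def drc_comp_def cpc_fcomp_def cpc_mor_drc2cpc
  using drc2cpc_is_cpc drc2cpc_hom by auto

lemma is_functor_cpc2drc:
  "is_functor (is_cpc :: 'a cpc \<Rightarrow> bool) cpc_hom cpc_id cpc_fcomp is_drc drc_hom drc_id drc_comp
     cpc2drc (\<lambda>S T f. f)"
  unfolding is_functor_def drc_id_def cpc_id_def drc_comp_def cpc_fcomp_def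
  using cpc2drc_is_drc cpc2drc_hom by auto

theorem theorem7p1:
  shows "isomorphic_categories
           (is_drc :: 'a drc \<Rightarrow> bool) drc_hom drc_id drc_comp
           (is_cpc :: 'a cpc \<Rightarrow> bool) cpc_hom cpc_id cpc_fcomp"
  unfolding isomorphic_categories_def
  using is_functor_drc2cpc is_functor_cpc2drc cpc2drc_drc2cpc drc2cpc_cpc2drc by fastforce
end
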